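(* Let $A$ and $B$ be finite-dimensional $C^*$-algebras. There exist a finite-dimensional Hilbert space $H$ and a channel $M:A\otimes B(H)\to B$ which is entanglement-invertible with respect to the canonical maximally entangled state $\Phi_H$ of $H\otimes H$ if and only if $\dim A=\dim B$.
   Context: A channel is a completely positive trace-preserving linear map between finite-dimensional $C^*$-algebras (acting on states). For an orthonormal basis $\{|h\rangle\}$ of $H$, $|\eta_H\rangle=\sum_h|h\rangle\otimes|h\rangle$ and $\Phi_H=|\eta_H\rangle\langle\eta_H|/\dim H$. Let $W$ be a state on $H_1\otimes H_2$ and $W'$ the same state with tensor factors swapped. A channel $M:A\otimes B(H_1)\to B$ is entanglement-invertible with respect to $W$ if there is a channel $N:B\otimes B(H_2)\to A$ with $N\big((M\otimes\mathrm{id}_{B(H_2)})(\rho\otimes W)\big)=\rho$ for all $\rho\in A$ and $M\big((N\otimes\mathrm{id}_{B(H_1)})(\sigma\otimes W')\big)=\sigma$ for all $\sigma\in B$. Here $H_1=H_2=H$, $W=\Phi_H$. $\dim$ denotes dimension as a complex vector space. *)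

theory Defs
  imports "Jordan_Normal_Form.Matrix"
begin

(* A finite-dimensional C*-algebra is (up to *-isomorphism) a direct sum of full matrix
   algebras M_{n_1} + ... + M_{n_r}.  We represent it concretely by the list ns = [n_1,...,n_r]
   of block sizes: the algebra is the set of block-diagonal complex matrices of size
   sum ns with diagonal blocks of sizes n_1,...,n_r. *)

definition blk_off :: "nat list \<Rightarrow> nat \<Rightarrow> nat" where
  "blk_off ns i = sum_list (take i ns)"

definition same_block :: "nat list \<Rightarrow> nat \<Rightarrow> nat \<Rightarrow> bool" where
  "same_block ns r c \<longleftrightarrow> (\<exists>i<length ns. blk_off ns i \<le> r \<and> r < blk_off ns i + ns ! i
                                      \<and> blk_off ns i \<le> c \<and> c < blk_off ns i + ns ! i)"

definition fdalg :: "nat list \<Rightarrow> complex mat set" where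
  "fdalg ns = {X \<in> carrier_mat (sum_list ns) (sum_list ns).
      \<forall>r < sum_list ns. \<forall>c < sum_list ns. \<not> same_block ns r c \<longrightarrow> X $$ (r, c) = 0}"

(* A \<otimes> B(C^k): the block sizes are multiplied by k *)
definition ampl :: "nat list \<Rightarrow> nat \<Rightarrow> nat list" where
  "ampl ns k = map (\<lambda>n. n * k) ns"

definition kron :: "complex mat \<Rightarrow> complex mat \<Rightarrow> complex mat" where
  "kron A B = mat (dim_row A * dim_row B) (dim_col A * dim_col B)
     (\<lambda>(i, j). A $$ (i div dim_row B, j div dim_col B) * B $$ (i mod dim_row B, j mod dim_col B))"

(* T \<otimes> id_{M_k}, for T mapping n\<times>n matrices to m\<times>m matrices *)
definition tensor_id :: "(complex mat \<Rightarrow> complex mat) \<Rightarrow> nat \<Rightarrow> nat \<Rightarrow> nat \<Rightarrow> complex mat \<Rightarrow> complex mat" where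
  "tensor_id T n m k Z = mat (m * k) (m * k)
     (\<lambda>(r, c). T (mat n n (\<lambda>(i, j). Z $$ (i * k + r mod k, j * k + c mod k))) $$ (r div k, c div k))"

definition mtrace :: "complex mat \<Rightarrow> complex" where
  "mtrace X = (\<Sum>i < dim_row X. X $$ (i, i))"

definition psd :: "nat \<Rightarrow> complex mat \<Rightarrow> bool" where
  "psd n X \<longleftrightarrow> X \<in> carrier_mat n n \<and>
     (\<forall>v :: nat \<Rightarrow> complex. Im (\<Sum>i<n. \<Sum>j<n. cnj (v i) * X $$ (i, j) * v j) = 0 \<and>
                             0 \<le> Re (\<Sum>i<n. \<Sum>j<n. cnj (v i) * X $$ (i, j) * v j))"

definition channel :: "nat list \<Rightarrow> nat list \<Rightarrow> (complex mat \<Rightarrow> complex mat) \<Rightarrow> bool" where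
  "channel ns ms T \<longleftrightarrow>
     (\<forall>X \<in> fdalg ns. T X \<in> fdalg ms) \<and>
     (\<forall>X \<in> fdalg ns. \<forall>Y \<in> fdalg ns. \<forall>a b :: complex.
         T (a \<cdot>\<^sub>m X + b \<cdot>\<^sub>m Y) = a \<cdot>\<^sub>m T X + b \<cdot>\<^sub>m T Y) \<and>
     (\<forall>X \<in> fdalg ns. mtrace (T X) = mtrace X) \<and>
     (\<forall>k > 0. \<forall>Z \<in> fdalg (ampl ns k). psd (sum_list ns * k) Z \<longrightarrow>
         psd (sum_list ms * k) (tensor_id T (sum_list ns) (sum_list ms) k Z))"

(* \<eta>_H = \<Sum>_h |h> \<otimes> |h> on C^d \<otimes> C^d, index (h1,h2) \<mapsto> h1*d + h2 *)
definition eta :: "nat \<Rightarrow> nat \<Rightarrow> complex" where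
  "eta d r = (if r div d = r mod d then 1 else 0)"

definition maxent :: "nat \<Rightarrow> complex mat" where
  "maxent d = mat (d * d) (d * d) (\<lambda>(r, c). complex_of_real (1 / real d) * eta d r * cnj (eta d c))"

definition swap_state :: "nat \<Rightarrow> nat \<Rightarrow> complex mat \<Rightarrow> complex mat" where
  "swap_state d1 d2 W = mat (d2 * d1) (d2 * d1)
     (\<lambda>(r, c). W $$ ((r mod d1) * d2 + r div d1, (c mod d1) * d2 + c div d1))"

definition ent_invertible ::
  "nat list \<Rightarrow> nat list \<Rightarrow> nat \<Rightarrow> complex mat \<Rightarrow> (complex mat \<Rightarrow> complex mat) \<Rightarrow> bool" where
  "ent_invertible ns ms d W M \<longleftrightarrow>
     channel (ampl ns d) ms M \<and>
     (\<exists>N. channel (ampl ms d) ns N \<and>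
        (\<forall>\<rho> \<in> fdalg ns. N (tensor_id M (sum_list ns * d) (sum_list ms) d (kron \<rho> W)) = \<rho>) \<and>
        (\<forall>\<sigma> \<in> fdalg ms. M (tensor_id N (sum_list ms * d) (sum_list ns) d (kron \<sigma> (swap_state d d W))) = \<sigma>))"

definition lin_comb :: "nat \<Rightarrow> (nat \<Rightarrow> complex) \<Rightarrow> complex mat list \<Rightarrow> complex mat" where
  "lin_comb n cs bs = mat n n (\<lambda>(i, j). \<Sum>k < length bs. cs k * bs ! k $$ (i, j))"

definition is_basis :: "nat list \<Rightarrow> complex mat list \<Rightarrow> bool" where
  "is_basis ns bs \<longleftrightarrow> set bs \<subseteq> fdalg ns \<and>
     (\<forall>X \<in> fdalg ns. \<exists>cs. X = lin_comb (sum_list ns) cs bs) \<and>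
     (\<forall>cs. lin_comb (sum_list ns) cs bs = 0\<^sub>m (sum_list ns) (sum_list ns) \<longrightarrow> (\<forall>k < length bs. cs k = 0))"

definition alg_dim :: "nat list \<Rightarrow> nat" where
  "alg_dim ns = (THE n. \<exists>bs. is_basis ns bs \<and> length bs = n)"

end

theory Submission
  imports Defs "HOL-Library.Function_Algebras" "HOL-Library.Product_Lexorder"
begin

(* Only if: dim A is the trace of the identity map \<rho> \<mapsto> N((M \<otimes> id)(\<rho> \<otimes> \<Phi>)) of A.  Expanded in
   matrix units, this trace is a sum over pairs of matrix units E_rc of A and E_UV of B of products
   of a matrix coefficient of M and one of N.  The sum is symmetric in (A, M) and (B, N), so it is
   also the trace of the identity map \<sigma> \<mapsto> M((N \<otimes> id)(\<sigma> \<otimes> \<Phi>)) of B, which is dim B.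

   If: a block M_n has the orthogonal basis of n^2 clock-and-shift (Weyl) matrices, so dim A = dim B
   gives a bijection f between the Weyl labels of A and of B.  Let P and Q be the products of the
   block sizes of A and of B, and H = C^P \<otimes> C^Q.  M makes a generalised Bell measurement of a block
   M_n of A against C^n inside C^P and, on the outcome x, applies the Weyl matrix labelled f x to
   C^m inside C^Q, output into the block M_m of B.  N is the same construction for f^-1 with the
   factors of H exchanged; the Bell measurements and Weyl corrections cancel as in teleportation. *)

lemma mult_add_less_mult:
  fixes a b X d :: nat
  assumes "a < X" and "b < d"
  shows "a * d + b < X * d"
proof -
  have "a * d + b < Suc a * d" using assms(2) by simp
  also have "\<dots> \<le> X * d" using assms(1) by (intro mult_right_mono) auto
  finally show ?thesis .
qed

lemma div_mod_eq_iff_eq_mult_add: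
  fixes i r s d :: nat
  shows "s < d \<Longrightarrow> (i div d = r \<and> i mod d = s) \<longleftrightarrow> i = r*d + s"
  by auto

lemma bij_betw_div_mod:
  assumes Q: "0 < (Q::nat)"
  shows "bij_betw (\<lambda>h. (h div Q, h mod Q)) {..<P*Q} ({..<P} \<times> {..<Q})"
proof (rule bij_betw_byWitness[where f'="\<lambda>(a,b). a*Q+b"])
  show "\<forall>a\<in>{..<P * Q}. (\<lambda>(a, b). a * Q + b) (a div Q, a mod Q) = a" by simp
  show "\<forall>a'\<in>{..<P} \<times> {..<Q}. (\<lambda>h. (h div Q, h mod Q)) ((\<lambda>(a, b). a * Q + b) a') = a'" by auto
  show "(\<lambda>h. (h div Q, h mod Q)) ` {..<P * Q} \<subseteq> {..<P} \<times> {..<Q}"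
    using Q by (auto simp: div_less_iff_less_mult)
  show "(\<lambda>(a, b). a * Q + b) ` ({..<P} \<times> {..<Q}) \<subseteq> {..<P * Q}"
    by (auto intro: mult_add_less_mult)
qed

lemma bij_betw_mod_div:
  assumes Q: "0 < (Q::nat)"
  shows "bij_betw (\<lambda>h. (h mod Q, h div Q)) {..<P*Q} ({..<Q} \<times> {..<P})"
proof -
  have "bij_betw ((\<lambda>(a,b). (b,a)) \<circ> (\<lambda>h. (h div Q, h mod Q))) {..<P*Q} ({..<Q} \<times> {..<P})"
  proof (rule bij_betw_trans[OF bij_betw_div_mod[OF Q]])
    show "bij_betw (\<lambda>(a, b). (b, a)) ({..<P} \<times> {..<Q}) ({..<Q} \<times> {..<P})"
      by (rule bij_betw_byWitness[where f'="\<lambda>(a,b). (b,a)"]) auto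
  qed
  then show ?thesis by (simp add: comp_def)
qed

lemma prod_list_pos: "\<forall>n\<in>set ns. 0 < n \<Longrightarrow> 0 < prod_list (ns::nat list)"
  by (induction ns) auto

lemma sum_lessThan_mult:
  fixes F :: "nat \<Rightarrow> 'a::comm_monoid_add"
  shows "(\<Sum>w<X*d. F w) = (\<Sum>u<X. \<Sum>h<d. F (u*d+h))"
proof -
  have "(\<Sum>h\<in>{0 + u*d..<d + u*d}. F h) = (\<Sum>h\<in>{0..<d}. F (h + u*d))" for u
    by (rule sum.shift_bounds_nat_ivl)
  then show ?thesis by (simp add: sum.nat_group[symmetric] atLeast0LessThan add.commute)
qed

lemma sum_lessThan_dvd_split:
  fixes F :: "nat \<Rightarrow> 'a::comm_monoid_add"
  assumes "n dvd P"
  shows "(\<Sum>a<P. F a) = (\<Sum>\<alpha><n. \<Sum>t<P div n. F (\<alpha> * (P div n) + t))"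
proof -
  have "P = n * (P div n)" using assms by simp
  then have "(\<Sum>a<P. F a) = (\<Sum>a<n * (P div n). F a)" by simp
  also have "\<dots> = (\<Sum>\<alpha><n. \<Sum>t<P div n. F (\<alpha> * (P div n) + t))" by (rule sum_lessThan_mult)
  finally show ?thesis .
qed

lemma sum_bij_pair:
  fixes G :: "nat \<Rightarrow> nat \<Rightarrow> 'a::comm_monoid_add"
  assumes b: "bij_betw (\<lambda>h. (l1 h, l2 h)) {..<d} ({..<P} \<times> {..<Q})"
  shows "(\<Sum>h<d. G (l1 h) (l2 h)) = (\<Sum>a<P. \<Sum>b<Q. G a b)"
proof -
  have "(\<Sum>h<d. G (l1 h) (l2 h)) = (\<Sum>h<d. (\<lambda>(a,b). G a b) ((\<lambda>h. (l1 h, l2 h)) h))" by simp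
  also have "\<dots> = (\<Sum>p\<in>{..<P} \<times> {..<Q}. (\<lambda>(a,b). G a b) p)"
    by (rule sum.reindex_bij_betw[OF b])
  also have "\<dots> = (\<Sum>a<P. \<Sum>b<Q. G a b)" by (simp add: sum.cartesian_product)
  finally show ?thesis .
qed

lemma sum_if_const_cond: "(\<Sum>x\<in>A. if C then f x else 0) = (if C then (\<Sum>x\<in>A. f x) else 0)"
  by simp

lemma sum_delta_both_eq:
  fixes c e :: nat and y :: "'a::comm_monoid_add"
  assumes "c < E"
  shows "(\<Sum>t<E. if t = c \<and> t = e then y else 0) = (if e = c then y else 0)"
proof -
  have "(\<Sum>t<E. if t = c \<and> t = e then y else 0) = (\<Sum>t<E. if t = c then (if e = c then y else 0) else 0)"
    by (intro sum.cong) auto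
  then show ?thesis using assms by (simp add: sum.delta)
qed

lemma sum_delta_conj:
  assumes "finite S"
  shows "(\<Sum>x\<in>S. if x = a \<and> C then g else 0) = (if a \<in> S \<and> C then g else 0)"
  using assms by (cases C) (simp_all add: sum.delta)

lemma sum_delta_mult_right: "(j::nat) < k \<Longrightarrow> (\<Sum>j'<k. f j' * (if j = j' then y else 0)) = f j * (y::'a::semiring_0)"
proof -
  assume j: "j < k"
  have "(\<Sum>j'<k. f j' * (if j = j' then y else 0)) = (\<Sum>j'<k. if j' = j then f j' * y else 0)"
    by (intro sum.cong) auto
  then show ?thesis using j by (simp add: sum.delta)
qed

lemma sum_delta_mult_left: "(i::nat) < k \<Longrightarrow> (\<Sum>i'<k. (if i = i' then y else 0) * f i') = (y::'a::semiring_0) * f i"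
proof -
  assume i: "i < k"
  have "(\<Sum>i'<k. (if i = i' then y else 0) * f i') = (\<Sum>i'<k. if i' = i then y * f i' else 0)"
    by (intro sum.cong) auto
  then show ?thesis using i by (simp add: sum.delta)
qed

lemma sum_nested4_rotate:
  fixes f :: "'a \<Rightarrow> 'b \<Rightarrow> 'c \<Rightarrow> 'd \<Rightarrow> 'z::comm_monoid_add"
  shows "(\<Sum>u\<in>A. \<Sum>k\<in>B. \<Sum>s\<in>C. \<Sum>t\<in>D. f u k s t) =
         (\<Sum>s\<in>C. \<Sum>t\<in>D. \<Sum>k\<in>B. \<Sum>u\<in>A. f u k s t)"
proof -
  have "(\<Sum>u\<in>A. \<Sum>k\<in>B. \<Sum>s\<in>C. \<Sum>t\<in>D. f u k s t) = (\<Sum>k\<in>B. \<Sum>u\<in>A. \<Sum>s\<in>C. \<Sum>t\<in>D. f u k s t)"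
    by (rule sum.swap)
  also have "\<dots> = (\<Sum>k\<in>B. \<Sum>s\<in>C. \<Sum>t\<in>D. \<Sum>u\<in>A. f u k s t)"
  proof (rule sum.cong[OF refl])
    fix k
    have "(\<Sum>u\<in>A. \<Sum>s\<in>C. \<Sum>t\<in>D. f u k s t) = (\<Sum>s\<in>C. \<Sum>u\<in>A. \<Sum>t\<in>D. f u k s t)" by (rule sum.swap)
    also have "\<dots> = (\<Sum>s\<in>C. \<Sum>t\<in>D. \<Sum>u\<in>A. f u k s t)" by (rule sum.cong[OF refl], rule sum.swap)
    finally show "(\<Sum>u\<in>A. \<Sum>s\<in>C. \<Sum>t\<in>D. f u k s t) = (\<Sum>s\<in>C. \<Sum>t\<in>D. \<Sum>u\<in>A. f u k s t)" .
  qed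
  also have "\<dots> = (\<Sum>s\<in>C. \<Sum>k\<in>B. \<Sum>t\<in>D. \<Sum>u\<in>A. f u k s t)" by (rule sum.swap)
  also have "\<dots> = (\<Sum>s\<in>C. \<Sum>t\<in>D. \<Sum>k\<in>B. \<Sum>u\<in>A. f u k s t)" by (rule sum.cong[OF refl], rule sum.swap)
  finally show ?thesis .
qed

lemma sum_nested5_rotate:
  fixes f :: "'a \<Rightarrow> 'b \<Rightarrow> 'c \<Rightarrow> 'd \<Rightarrow> 'e \<Rightarrow> 'z::comm_monoid_add"
  shows "(\<Sum>r\<in>A. \<Sum>c\<in>B. \<Sum>k\<in>C. \<Sum>s\<in>D. \<Sum>t\<in>E. f r c k s t) =
         (\<Sum>k\<in>C. \<Sum>s\<in>D. \<Sum>t\<in>E. \<Sum>r\<in>A. \<Sum>c\<in>B. f r c k s t)"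
proof -
  have "(\<Sum>r\<in>A. \<Sum>c\<in>B. \<Sum>k\<in>C. \<Sum>s\<in>D. \<Sum>t\<in>E. f r c k s t) =
        (\<Sum>r\<in>A. \<Sum>k\<in>C. \<Sum>s\<in>D. \<Sum>t\<in>E. \<Sum>c\<in>B. f r c k s t)"
  proof (rule sum.cong[OF refl])
    fix r
    have "(\<Sum>c\<in>B. \<Sum>k\<in>C. \<Sum>s\<in>D. \<Sum>t\<in>E. f r c k s t) = (\<Sum>k\<in>C. \<Sum>c\<in>B. \<Sum>s\<in>D. \<Sum>t\<in>E. f r c k s t)"
      by (rule sum.swap)
    also have "\<dots> = (\<Sum>k\<in>C. \<Sum>s\<in>D. \<Sum>c\<in>B. \<Sum>t\<in>E. f r c k s t)"
      by (rule sum.cong[OF refl], rule sum.swap)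
    also have "\<dots> = (\<Sum>k\<in>C. \<Sum>s\<in>D. \<Sum>t\<in>E. \<Sum>c\<in>B. f r c k s t)"
      by (rule sum.cong[OF refl], rule sum.cong[OF refl], rule sum.swap)
    finally show "(\<Sum>c\<in>B. \<Sum>k\<in>C. \<Sum>s\<in>D. \<Sum>t\<in>E. f r c k s t) = (\<Sum>k\<in>C. \<Sum>s\<in>D. \<Sum>t\<in>E. \<Sum>c\<in>B. f r c k s t)" .
  qed
  also have "\<dots> = (\<Sum>k\<in>C. \<Sum>r\<in>A. \<Sum>s\<in>D. \<Sum>t\<in>E. \<Sum>c\<in>B. f r c k s t)" by (rule sum.swap)
  also have "\<dots> = (\<Sum>k\<in>C. \<Sum>s\<in>D. \<Sum>r\<in>A. \<Sum>t\<in>E. \<Sum>c\<in>B. f r c k s t)"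
    by (rule sum.cong[OF refl], rule sum.swap)
  also have "\<dots> = (\<Sum>k\<in>C. \<Sum>s\<in>D. \<Sum>t\<in>E. \<Sum>r\<in>A. \<Sum>c\<in>B. f r c k s t)"
    by (rule sum.cong[OF refl], rule sum.cong[OF refl], rule sum.swap)
  finally show ?thesis .
qed

section \<open>Block structure\<close>

lemma blk_off_Suc: "i < length ns \<Longrightarrow> blk_off ns (Suc i) = blk_off ns i + ns ! i"
  unfolding blk_off_def by (simp add: take_Suc_conv_app_nth)

lemma blk_off_mono: "i \<le> i' \<Longrightarrow> blk_off ns i \<le> blk_off ns i'"
proof -
  assume "i \<le> i'"
  then obtain k where "i' = i + k" using le_Suc_ex by blast
  then show ?thesis unfolding blk_off_def
    by (simp add: take_add)
qed

lemma blk_off_len: "blk_off ns (length ns) = sum_list ns"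
  unfolding blk_off_def by simp

lemma blk_off_add_le_sum_list: "i < length ns \<Longrightarrow> blk_off ns i + ns ! i \<le> sum_list ns"
  by (metis blk_off_Suc blk_off_len blk_off_mono Suc_leI)

lemma blk_off_add_le_blk_off: "i < i' \<Longrightarrow> i < length ns \<Longrightarrow> blk_off ns i + ns ! i \<le> blk_off ns i'"
  by (metis blk_off_Suc blk_off_mono Suc_leI)

definition in_block :: "nat list \<Rightarrow> nat \<Rightarrow> nat \<Rightarrow> bool" where
  "in_block ns i r \<longleftrightarrow> i < length ns \<and> blk_off ns i \<le> r \<and> r < blk_off ns i + ns ! i"

lemma in_block_unique:
  assumes "in_block ns i r" and "in_block ns i' r"
  shows "i = i'"
proof (rule ccontr)
  assume "i \<noteq> i'"
  then consider "i < i'" | "i' < i" by linarith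
  then show False
    by cases (use assms blk_off_add_le_blk_off[of i i' ns] blk_off_add_le_blk_off[of i' i ns]
        in \<open>auto simp: in_block_def\<close>)
qed

lemma in_block_exists: "r < sum_list ns \<Longrightarrow> \<exists>i. in_block ns i r"
proof (induction ns arbitrary: r)
  case Nil then show ?case by simp
next
  case (Cons a ns)
  show ?case
  proof (cases "r < a")
    case True
    then show ?thesis by (intro exI[of _ 0]) (auto simp: in_block_def blk_off_def)
  next
    case False
    then have "r - a < sum_list ns" using Cons.prems by simp
    then obtain i where "in_block ns i (r - a)" using Cons.IH by blast
    then show ?thesis using False by (intro exI[of _ "Suc i"]) (auto simp: in_block_def blk_off_def)
  qed
qed

definition block_of :: "nat list \<Rightarrow> nat \<Rightarrow> nat" where
  "block_of ns r = (THE i. in_block ns i r)"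

lemma in_block_block_of: "r < sum_list ns \<Longrightarrow> in_block ns (block_of ns r) r"
  unfolding block_of_def by (rule theI') (use in_block_exists in_block_unique in blast)

lemma block_of_eqI: "in_block ns i r \<Longrightarrow> block_of ns r = i"
  by (metis in_block_block_of in_block_unique in_block_def blk_off_add_le_sum_list less_le_trans)

lemma in_block_less: "in_block ns i r \<Longrightarrow> r < sum_list ns"
  unfolding in_block_def using blk_off_add_le_sum_list by (meson less_le_trans)

lemma same_block_iff_in_block: "same_block ns r c \<longleftrightarrow> (\<exists>i. in_block ns i r \<and> in_block ns i c)"
  unfolding same_block_def in_block_def by blast

lemma sum_block_shift:
  fixes F :: "nat \<Rightarrow> 'a::comm_monoid_add"
  assumes j: "j < length ms"
  shows "(\<Sum>u<sum_list ms. if in_block ms j u then F (u - blk_off ms j) else 0) = (\<Sum>b0<ms!j. F b0)"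
proof -
  let ?o = "blk_off ms j"
  have sub: "{?o..<ms!j + ?o} \<subseteq> {..<sum_list ms}" using blk_off_add_le_sum_list[OF j] by auto
  have "(\<Sum>u<sum_list ms. if in_block ms j u then F (u - ?o) else 0) = (\<Sum>u\<in>{?o..<ms!j + ?o}. F (u - ?o))"
    by (rule sum.mono_neutral_cong_right[OF _ sub]) (auto simp: in_block_def j)
  also have "\<dots> = (\<Sum>u\<in>{0 + ?o..<ms!j + ?o}. F (u - ?o))" by simp
  also have "\<dots> = (\<Sum>b0\<in>{0..<ms!j}. F (b0 + ?o - ?o))" by (rule sum.shift_bounds_nat_ivl)
  also have "\<dots> = (\<Sum>b0<ms!j. F b0)" by (simp add: atLeast0LessThan)
  finally show ?thesis .
qed

lemma sum_list_ampl: "sum_list (ampl ns k) = sum_list ns * k"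
  unfolding ampl_def by (induction ns) (auto simp: algebra_simps)

lemma length_ampl[simp]: "length (ampl ns k) = length ns"
  unfolding ampl_def by simp

lemma nth_ampl: "i < length ns \<Longrightarrow> ampl ns k ! i = ns ! i * k"
  unfolding ampl_def by simp

lemma blk_off_ampl: "blk_off (ampl ns k) i = blk_off ns i * k"
  unfolding blk_off_def ampl_def
  by (metis ampl_def sum_list_ampl take_map)

lemma in_block_ampl: "0 < k \<Longrightarrow> in_block (ampl ns k) i w \<longleftrightarrow> in_block ns i (w div k)"
  unfolding in_block_def blk_off_ampl
  by (auto simp: nth_ampl less_eq_div_iff_mult_less_eq div_less_iff_less_mult algebra_simps)

lemma same_block_ampl: "0 < k \<Longrightarrow> same_block (ampl ns k) w w' \<longleftrightarrow> same_block ns (w div k) (w' div k)"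
  unfolding same_block_iff_in_block using in_block_ampl by blast

section \<open>Matrix units and linear maps\<close>

definition mat_unit :: "nat \<Rightarrow> nat \<Rightarrow> nat \<Rightarrow> complex mat" where
  "mat_unit n r c = mat n n (\<lambda>(i,j). if i = r \<and> j = c then 1 else 0)"

definition block_entries :: "nat list \<Rightarrow> (nat \<times> nat) set" where
  "block_entries ns = {(r,c). r < sum_list ns \<and> c < sum_list ns \<and> same_block ns r c}"

definition linear_on :: "nat list \<Rightarrow> (complex mat \<Rightarrow> complex mat) \<Rightarrow> bool" where
  "linear_on ns T \<longleftrightarrow> (\<forall>X \<in> fdalg ns. \<forall>Y \<in> fdalg ns. \<forall>a b :: complex.
         T (a \<cdot>\<^sub>m X + b \<cdot>\<^sub>m Y) = a \<cdot>\<^sub>m T X + b \<cdot>\<^sub>m T Y)"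

lemma channel_linear_on: "channel ns ms T \<Longrightarrow> linear_on ns T"
  unfolding channel_def linear_on_def by blast

lemma channel_fdalg: "channel ns ms T \<Longrightarrow> \<forall>X\<in>fdalg ns. T X \<in> fdalg ms"
  unfolding channel_def by blast

lemma finite_block_entries: "finite (block_entries ns)"
  by (rule finite_subset[of _ "{..<sum_list ns} \<times> {..<sum_list ns}"]) (auto simp: block_entries_def)

lemma mat_unit_fdalg: "(r,c) \<in> block_entries ns \<Longrightarrow> mat_unit (sum_list ns) r c \<in> fdalg ns"
  unfolding fdalg_def mat_unit_def block_entries_def by auto

lemma mat_unit_diag: "r < n \<Longrightarrow> c < n \<Longrightarrow> mat_unit n r c $$ (r,c) = 1"
  unfolding mat_unit_def by simp

lemma block_entries_ampl_mem:
  assumes "(r,c) \<in> block_entries ns" "s < d" "t < d"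
  shows "(r*d+s, c*d+t) \<in> block_entries (ampl ns d)"
proof -
  have d: "0 < d" using assms by auto
  have "r*d+s < sum_list ns * d" "c*d+t < sum_list ns * d"
    using assms unfolding block_entries_def
    by (auto simp: less_mult_imp_div_less div_less_iff_less_mult[OF d, symmetric] )
  then show ?thesis using assms same_block_ampl[OF d] unfolding block_entries_def by (auto simp: sum_list_ampl)
qed

lemma sum_block_entries_ampl:
  fixes G :: "nat \<times> nat \<Rightarrow> 'a::comm_monoid_add"
  assumes d: "0 < d"
  shows "(\<Sum>w\<in>block_entries (ampl ms d). G w) = (\<Sum>(U,V)\<in>block_entries ms. \<Sum>s<d. \<Sum>t<d. G (U*d+s, V*d+t))"
proof -
  let ?f = "\<lambda>((U,V),(s,t)). (U*d+s, V*d+t)"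
  have b: "bij_betw ?f (block_entries ms \<times> ({..<d} \<times> {..<d})) (block_entries (ampl ms d))"
  proof (rule bij_betw_byWitness[where f'="\<lambda>(w,w'). ((w div d, w' div d), (w mod d, w' mod d))"])
    show "\<forall>a\<in>block_entries ms \<times> {..<d} \<times> {..<d}. (\<lambda>(w,w'). ((w div d, w' div d), (w mod d, w' mod d))) (?f a) = a"
      by auto
    show "\<forall>a'\<in>block_entries (ampl ms d). ?f ((\<lambda>(w,w'). ((w div d, w' div d), (w mod d, w' mod d))) a') = a'"
      by auto
    show "?f ` (block_entries ms \<times> {..<d} \<times> {..<d}) \<subseteq> block_entries (ampl ms d)"
      using block_entries_ampl_mem by auto
    show "(\<lambda>(w,w'). ((w div d, w' div d), (w mod d, w' mod d))) ` block_entries (ampl ms d) \<subseteq> block_entries ms \<times> {..<d} \<times> {..<d}"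
      using d by (auto simp: block_entries_def sum_list_ampl same_block_ampl div_less_iff_less_mult)
  qed
  have "(\<Sum>w\<in>block_entries (ampl ms d). G w) = (\<Sum>p\<in>block_entries ms \<times> ({..<d} \<times> {..<d}). G (?f p))"
    using sum.reindex_bij_betw[OF b, of G] by simp
  also have "\<dots> = (\<Sum>(U,V)\<in>block_entries ms. \<Sum>s<d. \<Sum>t<d. G (U*d+s, V*d+t))"
    by (simp add: sum.cartesian_product split_beta)
  finally show ?thesis .
qed

lemma fdalg_carrier: "X \<in> fdalg ns \<Longrightarrow> X \<in> carrier_mat (sum_list ns) (sum_list ns)"
  unfolding fdalg_def by auto

lemma fdalg_off_block: "X \<in> fdalg ns \<Longrightarrow> r < sum_list ns \<Longrightarrow> c < sum_list ns \<Longrightarrow> \<not> same_block ns r c \<Longrightarrow> X $$ (r,c) = 0"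
  unfolding fdalg_def by auto

lemma sum_blocks_fdalg_index:
  assumes \<rho>: "\<rho> \<in> fdalg ns" and r: "r < sum_list ns" "r' < sum_list ns"
  shows "(\<Sum>i<length ns. if in_block ns i r \<and> in_block ns i r' then \<rho> $$ (r,r') else 0) = \<rho> $$ (r,r')"
proof (cases "same_block ns r r'")
  case True
  then obtain i0 where i0: "in_block ns i0 r" "in_block ns i0 r'" unfolding same_block_iff_in_block by blast
  have "in_block ns i r \<and> in_block ns i r' \<longleftrightarrow> i = i0" for i
    using i0 in_block_unique[of ns i r i0] by blast
  moreover have "i0 < length ns" using i0 by (simp add: in_block_def)
  ultimately show ?thesis by simp
next
  case False
  then have "\<rho> $$ (r,r') = 0" by (rule fdalg_off_block[OF \<rho> r])
  then show ?thesis by (simp only: if_cancel sum.neutral_const)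
qed

lemma smult_add_mat_index:
  assumes "A \<in> carrier_mat m m" "B \<in> carrier_mat m m" "i < m" "j < m"
  shows "(a \<cdot>\<^sub>m A + b \<cdot>\<^sub>m B) $$ (i,j) = a * A $$ (i,j) + b * B $$ (i,j)"
  using assms by auto

lemma linear_on_zero_index:
  assumes lin: "linear_on ns T" and into: "\<forall>X\<in>fdalg ns. T X \<in> carrier_mat m m"
    and "a < m" "b < m"
  shows "T (0\<^sub>m (sum_list ns) (sum_list ns)) $$ (a,b) = 0"
proof -
  let ?Z = "0\<^sub>m (sum_list ns) (sum_list ns) :: complex mat"
  have Z: "?Z \<in> fdalg ns" unfolding fdalg_def by auto
  have "?Z = 0 \<cdot>\<^sub>m ?Z + 0 \<cdot>\<^sub>m ?Z" by (rule eq_matI) auto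
  then have "T ?Z = 0 \<cdot>\<^sub>m T ?Z + 0 \<cdot>\<^sub>m T ?Z" using lin Z unfolding linear_on_def by metis
  then show ?thesis using into Z assms smult_add_mat_index[of "T ?Z" m "T ?Z" a b 0 0] by simp
qed

lemma linear_on_smult:
  assumes lin: "linear_on ns T" and "X \<in> fdalg ns"
  shows "T (a \<cdot>\<^sub>m X) = a \<cdot>\<^sub>m T X + 0 \<cdot>\<^sub>m T X"
proof -
  have "a \<cdot>\<^sub>m X = a \<cdot>\<^sub>m X + 0 \<cdot>\<^sub>m X" by (rule eq_matI) auto
  then show ?thesis using lin assms unfolding linear_on_def by metis
qed

lemma linear_on_smult_index:
  assumes lin: "linear_on ns T" and "X \<in> fdalg ns" and into: "\<forall>X\<in>fdalg ns. T X \<in> carrier_mat m m"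
    and "i < m" "j < m"
  shows "T (a \<cdot>\<^sub>m X) $$ (i,j) = a * T X $$ (i,j)"
  using linear_on_smult[OF lin assms(2), of a] into assms smult_add_mat_index[of "T X" m "T X" i j a 0] by simp

lemma linear_on_index_expansion:
  assumes lin: "linear_on ns T" and into: "\<forall>X\<in>fdalg ns. T X \<in> carrier_mat m m"
    and Y: "Y \<in> fdalg ns" and ab: "a < m" "b < m"
  shows "T Y $$ (a,b) = (\<Sum>w\<in>block_entries ns. Y $$ w * T (mat_unit (sum_list ns) (fst w) (snd w)) $$ (a,b))"
proof -
  let ?N = "sum_list ns"
  define restr where "restr F = mat ?N ?N (\<lambda>(i,j). if (i,j) \<in> F then Y $$ (i,j) else 0)" for F
  have rin: "restr F \<in> fdalg ns" if "F \<subseteq> block_entries ns" for F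
    using that unfolding fdalg_def restr_def block_entries_def by auto
  have main: "F \<subseteq> block_entries ns \<Longrightarrow> T (restr F) $$ (a,b) = (\<Sum>w\<in>F. Y $$ w * T (mat_unit ?N (fst w) (snd w)) $$ (a,b))"
    if "finite F" for F
    using that
  proof (induction F rule: finite_induct)
    case empty
    have "restr {} = 0\<^sub>m ?N ?N" unfolding restr_def by (rule eq_matI) auto
    then show ?case using linear_on_zero_index[OF lin into ab] by simp
  next
    case (insert w F)
    obtain r c where w: "w = (r,c)" by fastforce
    have F: "F \<subseteq> block_entries ns" and wS: "w \<in> block_entries ns" using insert by auto
    have eq: "restr (insert w F) = 1 \<cdot>\<^sub>m restr F + (Y $$ w) \<cdot>\<^sub>m mat_unit ?N r c"
      unfolding restr_def mat_unit_def using insert.hyps(2) w by (intro eq_matI) auto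
    have mu: "mat_unit ?N r c \<in> fdalg ns" using mat_unit_fdalg wS w by simp
    have "T (restr (insert w F)) = 1 \<cdot>\<^sub>m T (restr F) + (Y $$ w) \<cdot>\<^sub>m T (mat_unit ?N r c)"
      unfolding eq using lin rin[OF F] mu unfolding linear_on_def by blast
    then have "T (restr (insert w F)) $$ (a,b) = T (restr F) $$ (a,b) + Y $$ w * T (mat_unit ?N r c) $$ (a,b)"
      using into rin[OF F] mu ab smult_add_mat_index[of "T (restr F)" m "T (mat_unit ?N r c)" a b 1 "Y $$ w"] by simp
    then show ?case using insert F w by simp
  qed
  have "restr (block_entries ns) = Y"
    using Y unfolding restr_def fdalg_def block_entries_def by (intro eq_matI) auto
  then show ?thesis using main[OF finite_block_entries[of ns]] by simp
qed

section \<open>Dimension of a block algebra\<close>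

(* Matrices of varying size do not form a vector space type, so a block algebra is
   embedded into the functions on index pairs to use the library's dimension theory. *)
definition mat_fun :: "nat \<Rightarrow> complex mat \<Rightarrow> (nat \<times> nat \<Rightarrow> complex)" where
  "mat_fun n X = (\<lambda>(i,j). if i < n \<and> j < n then X $$ (i,j) else 0)"

definition fun_scale :: "complex \<Rightarrow> (nat \<times> nat \<Rightarrow> complex) \<Rightarrow> (nat \<times> nat \<Rightarrow> complex)" where
  "fun_scale c f = (\<lambda>x. c * f x)"

interpretation VS: vector_space fun_scale
  by unfold_locales (auto simp: fun_scale_def fun_eq_iff algebra_simps)

lemma sum_fun_apply: "(\<Sum>k\<in>A. f k) x = (\<Sum>k\<in>A. f k x)"
  by (induction A rule: infinite_finite_induct) auto

lemma mat_fun_inj: "X \<in> carrier_mat n n \<Longrightarrow> Y \<in> carrier_mat n n \<Longrightarrow> mat_fun n X = mat_fun n Y \<Longrightarrow> X = Y"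
proof (rule eq_matI)
  fix i j assume "X \<in> carrier_mat n n" "Y \<in> carrier_mat n n" "mat_fun n X = mat_fun n Y" "i < dim_row Y" "j < dim_col Y"
  then have "mat_fun n X (i,j) = mat_fun n Y (i,j)" by simp
  then show "X $$ (i,j) = Y $$ (i,j)" using \<open>i < dim_row Y\<close> \<open>j < dim_col Y\<close> \<open>Y \<in> carrier_mat n n\<close>
    unfolding mat_fun_def by auto
qed auto

lemma mat_fun_lin_comb:
  "mat_fun n (lin_comb n cs bs) = (\<Sum>k<length bs. fun_scale (cs k) (mat_fun n (bs ! k)))"
  by (auto simp: fun_eq_iff mat_fun_def lin_comb_def fun_scale_def sum_fun_apply)

lemma is_basis_distinct:
  assumes b: "is_basis ns bs"
  shows "distinct bs"
proof (rule ccontr)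
  let ?N = "sum_list ns"
  assume "\<not> distinct bs"
  then obtain a b where ab: "a < length bs" "b < length bs" "a \<noteq> b" "bs ! a = bs ! b"
    unfolding distinct_conv_nth by blast
  define cs where "cs k = (if k = a then 1 else if k = b then -1 else (0::complex))" for k
  have "lin_comb ?N cs bs = 0\<^sub>m ?N ?N"
  proof (rule eq_matI)
    fix i j assume "i < dim_row (0\<^sub>m ?N ?N :: complex mat)" "j < dim_col (0\<^sub>m ?N ?N :: complex mat)"
    then have ij: "i < ?N" "j < ?N" by auto
    have "(\<Sum>k<length bs. cs k * bs ! k $$ (i, j)) =
       (\<Sum>k<length bs. (if k = a then bs ! k $$ (i,j) else 0) - (if k = b then bs ! k $$ (i,j) else 0))"
      by (rule sum.cong) (auto simp: cs_def ab(3))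
    also have "\<dots> = bs ! a $$ (i,j) - bs ! b $$ (i,j)"
      using ab by (simp add: sum_subtractf sum.delta)
    finally show "lin_comb ?N cs bs $$ (i,j) = 0\<^sub>m ?N ?N $$ (i,j)"
      using ij ab by (simp add: lin_comb_def)
  qed (auto simp: lin_comb_def)
  then have "cs a = 0" using b ab unfolding is_basis_def by blast
  then show False by (simp add: cs_def)
qed

lemma is_basis_inj_nth:
  assumes b: "is_basis ns bs"
  shows "inj_on (\<lambda>k. mat_fun (sum_list ns) (bs ! k)) {..<length bs}"
proof (rule inj_onI)
  fix x y assume xy: "x \<in> {..<length bs}" "y \<in> {..<length bs}"
    and eq: "mat_fun (sum_list ns) (bs ! x) = mat_fun (sum_list ns) (bs ! y)"
  have "set bs \<subseteq> carrier_mat (sum_list ns) (sum_list ns)"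
    using b fdalg_carrier unfolding is_basis_def by blast
  then have "bs ! x = bs ! y" using mat_fun_inj[OF _ _ eq] xy nth_mem by blast
  then show "x = y" using nth_eq_iff_index_eq[OF is_basis_distinct[OF b]] xy by auto
qed

lemma is_basis_span:
  assumes b: "is_basis ns bs"
  shows "mat_fun (sum_list ns) ` fdalg ns \<subseteq> VS.span (mat_fun (sum_list ns) ` set bs)"
proof
  let ?N = "sum_list ns"
  fix v assume "v \<in> mat_fun ?N ` fdalg ns"
  then obtain X where X: "X \<in> fdalg ns" "v = mat_fun ?N X" by blast
  then obtain cs where "X = lin_comb ?N cs bs" using b unfolding is_basis_def by blast
  then have "v = (\<Sum>k<length bs. fun_scale (cs k) (mat_fun ?N (bs ! k)))" using X mat_fun_lin_comb by simp
  also have "\<dots> \<in> VS.span (mat_fun ?N ` set bs)"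
    by (intro VS.span_sum VS.span_scale VS.span_base) auto
  finally show "v \<in> VS.span (mat_fun ?N ` set bs)" .
qed

lemma is_basis_independent:
  assumes b: "is_basis ns bs"
  shows "VS.independent (mat_fun (sum_list ns) ` set bs)"
  unfolding VS.independent_explicit_finite_subsets
proof (intro allI impI ballI)
  let ?N = "sum_list ns"
  fix T u v assume T: "T \<subseteq> mat_fun ?N ` set bs" and s0: "(\<Sum>v\<in>T. fun_scale (u v) v) = 0"
    and vT: "v \<in> T"
  define cs where "cs k = (if mat_fun ?N (bs ! k) \<in> T then u (mat_fun ?N (bs ! k)) else 0)" for k
  let ?K = "{k \<in> {..<length bs}. mat_fun ?N (bs ! k) \<in> T}"
  have imK: "(\<lambda>k. mat_fun ?N (bs ! k)) ` ?K = T"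
  proof
    show "T \<subseteq> (\<lambda>k. mat_fun ?N (bs ! k)) ` ?K"
    proof
      fix w assume w: "w \<in> T"
      then obtain Y where "Y \<in> set bs" "w = mat_fun ?N Y" using T by blast
      then obtain k where "k < length bs" "w = mat_fun ?N (bs ! k)" by (metis in_set_conv_nth)
      then show "w \<in> (\<lambda>k. mat_fun ?N (bs ! k)) ` ?K" using w by blast
    qed
  qed auto
  have injK: "inj_on (\<lambda>k. mat_fun ?N (bs ! k)) ?K"
    using is_basis_inj_nth[OF b] by (rule inj_on_subset) auto
  have "lin_comb ?N cs bs = 0\<^sub>m ?N ?N"
  proof (rule eq_matI)
    fix i j assume "i < dim_row (0\<^sub>m ?N ?N :: complex mat)" "j < dim_col (0\<^sub>m ?N ?N :: complex mat)"
    then have ij: "i < ?N" "j < ?N" by auto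
    have "(\<Sum>k<length bs. cs k * bs ! k $$ (i, j)) = (\<Sum>k\<in>?K. u (mat_fun ?N (bs ! k)) * mat_fun ?N (bs ! k) (i,j))"
      by (rule sum.mono_neutral_cong_right) (auto simp: cs_def mat_fun_def ij)
    also have "\<dots> = (\<Sum>w\<in>T. u w * w (i,j))"
      using sum.reindex[OF injK, of "\<lambda>w. u w * w (i,j)"] imK by simp
    also have "\<dots> = (\<Sum>w\<in>T. fun_scale (u w) w) (i,j)" by (simp add: sum_fun_apply fun_scale_def)
    also have "\<dots> = 0" using s0 by simp
    finally show "lin_comb ?N cs bs $$ (i,j) = 0\<^sub>m ?N ?N $$ (i,j)"
      using ij by (simp add: lin_comb_def)
  qed (auto simp: lin_comb_def)
  then have cs0: "\<forall>k<length bs. cs k = 0" using b unfolding is_basis_def by blast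
  obtain k where "k < length bs" "v = mat_fun ?N (bs ! k)" using vT imK by blast
  then show "u v = 0" using cs0 vT by (auto simp: cs_def)
qed

lemma is_basis_length:
  assumes b: "is_basis ns bs"
  shows "length bs = VS.dim (mat_fun (sum_list ns) ` fdalg ns)"
proof -
  let ?N = "sum_list ns"
  have "inj_on (mat_fun ?N) (set bs)"
    using b fdalg_carrier mat_fun_inj unfolding is_basis_def by (meson inj_onI subsetD)
  then have "card (mat_fun ?N ` set bs) = length bs"
    using distinct_card[OF is_basis_distinct[OF b]] by (simp add: card_image)
  moreover have "mat_fun ?N ` set bs \<subseteq> mat_fun ?N ` fdalg ns"
    using b unfolding is_basis_def by blast
  ultimately show ?thesis
    using VS.basis_card_eq_dim[OF _ is_basis_span[OF b] is_basis_independent[OF b]] by simp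
qed

definition mat_unit_list :: "nat list \<Rightarrow> complex mat list" where
  "mat_unit_list ns = map (\<lambda>(r,c). mat_unit (sum_list ns) r c) (sorted_list_of_set (block_entries ns))"

lemma is_basis_mat_unit_list: "is_basis ns (mat_unit_list ns)"
proof -
  let ?N = "sum_list ns"
  let ?ws = "sorted_list_of_set (block_entries ns)"
  have sw: "set ?ws = block_entries ns" and dw: "distinct ?ws" using finite_block_entries by auto
  have len: "length (mat_unit_list ns) = length ?ws" by (simp add: mat_unit_list_def)
  have nth: "k < length ?ws \<Longrightarrow> mat_unit_list ns ! k = mat_unit ?N (fst (?ws ! k)) (snd (?ws ! k))" for k
    by (simp add: mat_unit_list_def split_beta)
  have lc: "lin_comb ?N cs (mat_unit_list ns) $$ (i,j) = (\<Sum>k<length ?ws. if ?ws ! k = (i,j) then cs k else 0)"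
    if "i < ?N" "j < ?N" for cs i j
    unfolding lin_comb_def using that
    by (auto simp: len nth mat_unit_def intro!: sum.cong split: if_splits)
  show ?thesis unfolding is_basis_def
  proof (intro conjI ballI allI impI)
    show "set (mat_unit_list ns) \<subseteq> fdalg ns" using mat_unit_fdalg sw by (auto simp: mat_unit_list_def)
  next
    fix X assume X: "X \<in> fdalg ns"
    let ?cs = "\<lambda>k. X $$ (?ws ! k)"
    have "X = lin_comb ?N ?cs (mat_unit_list ns)"
    proof (rule eq_matI)
      fix i j assume ij: "i < dim_row (lin_comb ?N ?cs (mat_unit_list ns))" "j < dim_col (lin_comb ?N ?cs (mat_unit_list ns))"
      then have ij': "i < ?N" "j < ?N" by (auto simp: lin_comb_def)
      have "(\<Sum>k<length ?ws. if ?ws ! k = (i,j) then ?cs k else 0) = (\<Sum>w\<in>set ?ws. if w = (i,j) then X $$ w else 0)"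
        by (simp add: sum.distinct_set_conv_list[OF dw] sum_list_sum_nth atLeast0LessThan)
      also have "\<dots> = (if (i,j) \<in> block_entries ns then X $$ (i,j) else 0)"
        using sw finite_block_entries[of ns] by (simp add: sum.delta)
      also have "\<dots> = X $$ (i,j)"
        using X ij' fdalg_off_block[OF X] by (auto simp: block_entries_def)
      finally show "X $$ (i,j) = lin_comb ?N ?cs (mat_unit_list ns) $$ (i,j)" using lc[OF ij'] by simp
    qed (use X in \<open>auto simp: lin_comb_def fdalg_def\<close>)
    then show "\<exists>cs. X = lin_comb ?N cs (mat_unit_list ns)" by blast
  next
    fix cs k assume z: "lin_comb ?N cs (mat_unit_list ns) = 0\<^sub>m ?N ?N" and k: "k < length (mat_unit_list ns)"
    obtain i j where w: "?ws ! k = (i,j)" by fastforce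
    have "(i,j) \<in> block_entries ns" using w k sw len by (metis nth_mem)
    then have ij: "i < ?N" "j < ?N" by (auto simp: block_entries_def)
    have "(\<Sum>k'<length ?ws. if ?ws ! k' = (i,j) then cs k' else 0) = (\<Sum>k'<length ?ws. if k' = k then cs k' else 0)"
    proof (rule sum.cong[OF refl])
      fix x assume "x \<in> {..<length ?ws}"
      then have "?ws ! x = (i,j) \<longleftrightarrow> x = k" using nth_eq_iff_index_eq[OF dw, of x k] w k len by auto
      then show "(if ?ws ! x = (i,j) then cs x else 0) = (if x = k then cs x else 0)" by simp
    qed
    also have "\<dots> = cs k" using k len by (simp add: sum.delta)
    finally show "cs k = 0" using lc[OF ij, of cs] z ij by simp
  qed
qed

lemma alg_dim_eq_card: "alg_dim ns = card (block_entries ns)"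
proof -
  have lc: "length (mat_unit_list ns) = card (block_entries ns)"
    by (simp add: mat_unit_list_def finite_block_entries)
  show ?thesis unfolding alg_dim_def
  proof (rule the_equality)
    show "\<exists>bs. is_basis ns bs \<and> length bs = card (block_entries ns)" using is_basis_mat_unit_list lc by blast
  next
    fix n assume "\<exists>bs. is_basis ns bs \<and> length bs = n"
    then obtain bs where "is_basis ns bs" "length bs = n" by blast
    then show "n = card (block_entries ns)" using is_basis_length[of ns bs] is_basis_length[OF is_basis_mat_unit_list] lc by simp
  qed
qed

section \<open>The maximally entangled state\<close>

lemma square_index_div_mod:
  fixes i s d :: nat
  assumes "s < d"
  shows "(i*d+s) div (d*d) = i div d" "(i*d+s) mod (d*d) = (i mod d)*d + s"
proof -
  have e: "i*d+s = (i div d)*(d*d) + ((i mod d)*d + s)"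
    by (metis add.commute add.left_commute div_mult_mod_eq mult.assoc distrib_right)
  have lt: "(i mod d)*d + s < d*d" using assms by (intro mult_add_less_mult) auto
  show "(i*d+s) div (d*d) = i div d" "(i*d+s) mod (d*d) = (i mod d)*d + s"
    using lt assms by (subst e; simp)+
qed

lemma eta_index: "s < d \<Longrightarrow> eta d (a*d + s) = (if a = s then 1 else 0)"
  unfolding eta_def by simp

lemma kron_maxent_index:
  assumes X: "X \<in> carrier_mat n n" and "i < n*d" "j < n*d" "s < d" "t < d"
  shows "kron X (maxent d) $$ (i*d+s, j*d+t) =
     X $$ (i div d, j div d) * (if i mod d = s \<and> j mod d = t then 1 / of_nat d else 0)"
proof -
  have d: "0 < d" using assms by auto
  have ii: "i*d+s < n*(d*d)" and jj: "j*d+t < n*(d*d)"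
    using mult_add_less_mult[of i "n*d" s d] mult_add_less_mult[of j "n*d" t d] assms
    by (simp_all add: mult.assoc)
  have m1: "(i mod d)*d + s < d*d" "(j mod d)*d + t < d*d"
    using assms d by (auto intro: mult_add_less_mult)
  have "kron X (maxent d) $$ (i*d+s, j*d+t) =
     X $$ (i div d, j div d) * maxent d $$ ((i mod d)*d + s, (j mod d)*d + t)"
    unfolding kron_def using X ii jj by (simp add: maxent_def square_index_div_mod[OF \<open>s<d\<close>] square_index_div_mod[OF \<open>t<d\<close>])
  also have "maxent d $$ ((i mod d)*d + s, (j mod d)*d + t) = (if i mod d = s \<and> j mod d = t then 1 / of_nat d else 0)"
    unfolding maxent_def using m1 \<open>s<d\<close> \<open>t<d\<close> by (simp add: eta_index)
  finally show ?thesis .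
qed

lemma swap_state_maxent: "swap_state d d (maxent d) = maxent d"
proof (rule eq_matI)
  fix i j assume "i < dim_row (maxent d)" "j < dim_col (maxent d)"
  then have ij: "i < d*d" "j < d*d" by (auto simp: maxent_def)
  have d0: "0 < d" using ij by (metis mult_0_right not_gr_zero not_less_zero)
  have "i div d < d" "j div d < d" using ij by (auto simp: div_less_iff_less_mult[OF d0])
  then have e: "eta d ((i mod d) * d + i div d) = eta d i" "eta d ((j mod d) * d + j div d) = eta d j"
    by (auto simp: eta_index eta_def)
  have lt: "(i mod d) * d + i div d < d*d" "(j mod d) * d + j div d < d*d"
    using d0 \<open>i div d < d\<close> \<open>j div d < d\<close> by (auto intro: mult_add_less_mult)
  show "swap_state d d (maxent d) $$ (i, j) = maxent d $$ (i, j)"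
    unfolding swap_state_def using ij lt e by (simp add: maxent_def)
qed (auto simp: swap_state_def maxent_def)

lemma tensor_id_index:
  assumes "w < m*k" "w' < m*k"
  shows "tensor_id T n m k Z $$ (w,w') =
     T (mat n n (\<lambda>(i, j). Z $$ (i * k + w mod k, j * k + w' mod k))) $$ (w div k, w' div k)"
  unfolding tensor_id_def using assms by simp

lemma sum_kron_maxent:
  fixes Lf Lg :: "nat \<Rightarrow> complex"
  assumes d: "0 < d" and \<rho>: "\<rho> \<in> carrier_mat A A"
  shows "(\<Sum>\<sigma><A*d*d. \<Sum>\<tau><A*d*d. Lf \<sigma> * kron \<rho> (maxent d) $$ (\<sigma>,\<tau>) * Lg \<tau>) =
    (1 / of_nat d) * (\<Sum>r1<A. \<Sum>r1'<A. \<rho> $$ (r1,r1') * (\<Sum>h<d. Lf ((r1*d+h)*d+h)) * (\<Sum>h'<d. Lg ((r1'*d+h')*d+h')))"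
proof -
  let ?X = "kron \<rho> (maxent d)"
  have "(\<Sum>\<sigma><A*d*d. \<Sum>\<tau><A*d*d. Lf \<sigma> * ?X $$ (\<sigma>,\<tau>) * Lg \<tau>) =
     (\<Sum>a<A*d. \<Sum>h2<d. \<Sum>b<A*d. \<Sum>t2<d. Lf (a*d+h2) * ?X $$ (a*d+h2, b*d+t2) * Lg (b*d+t2))"
    by (simp add: sum_lessThan_mult)
  also have "\<dots> = (\<Sum>a<A*d. \<Sum>h2<d. \<Sum>b<A*d. \<Sum>t2<d.
      if h2 = a mod d \<and> t2 = b mod d then Lf (a*d+h2) * \<rho> $$ (a div d, b div d) * (1 / of_nat d) * Lg (b*d+t2) else 0)"
    by (intro sum.cong refl) (auto simp: kron_maxent_index[OF \<rho>])
  also have "\<dots> = (\<Sum>a<A*d. \<Sum>b<A*d. Lf (a*d + a mod d) * \<rho> $$ (a div d, b div d) * (1 / of_nat d) * Lg (b*d + b mod d))"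
  proof (rule sum.cong[OF refl])
    fix a
    have "(\<Sum>h2<d. \<Sum>b<A*d. \<Sum>t2<d.
      if h2 = a mod d \<and> t2 = b mod d then Lf (a*d+h2) * \<rho> $$ (a div d, b div d) * (1 / of_nat d) * Lg (b*d+t2) else 0) =
      (\<Sum>h2<d. if h2 = a mod d then (\<Sum>b<A*d. \<Sum>t2<d.
      if t2 = b mod d then Lf (a*d+h2) * \<rho> $$ (a div d, b div d) * (1 / of_nat d) * Lg (b*d+t2) else 0) else 0)"
      by (intro sum.cong refl) auto
    also have "\<dots> = (\<Sum>b<A*d. \<Sum>t2<d.
      if t2 = b mod d then Lf (a*d + a mod d) * \<rho> $$ (a div d, b div d) * (1 / of_nat d) * Lg (b*d+t2) else 0)"
      using d by (simp add: sum.delta)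
    also have "\<dots> = (\<Sum>b<A*d. Lf (a*d + a mod d) * \<rho> $$ (a div d, b div d) * (1 / of_nat d) * Lg (b*d + b mod d))"
      using d by (simp add: sum.delta)
    finally show "(\<Sum>h2<d. \<Sum>b<A*d. \<Sum>t2<d.
      if h2 = a mod d \<and> t2 = b mod d then Lf (a*d+h2) * \<rho> $$ (a div d, b div d) * (1 / of_nat d) * Lg (b*d+t2) else 0) =
      (\<Sum>b<A*d. Lf (a*d + a mod d) * \<rho> $$ (a div d, b div d) * (1 / of_nat d) * Lg (b*d + b mod d))" .
  qed
  also have "\<dots> = (\<Sum>r1<A. \<Sum>h1<d. \<Sum>r1'<A. \<Sum>h1'<d. Lf ((r1*d+h1)*d + h1) * \<rho> $$ (r1, r1') * (1 / of_nat d) * Lg ((r1'*d+h1')*d + h1'))"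
    using d by (simp add: sum_lessThan_mult)
  also have "\<dots> = (\<Sum>r1<A. \<Sum>r1'<A. \<Sum>h1<d. \<Sum>h1'<d. Lf ((r1*d+h1)*d + h1) * \<rho> $$ (r1, r1') * (1 / of_nat d) * Lg ((r1'*d+h1')*d + h1'))"
    by (rule sum.cong[OF refl], rule sum.swap)
  also have "\<dots> = (1 / of_nat d) * (\<Sum>r1<A. \<Sum>r1'<A. \<rho> $$ (r1,r1') * (\<Sum>h<d. Lf ((r1*d+h)*d+h)) * (\<Sum>h'<d. Lg ((r1'*d+h')*d+h')))"
    by (simp add: sum_distrib_left sum_distrib_right mult_ac)
  finally show ?thesis .
qed

section \<open>Necessity: the trace argument\<close>

definition with_maxent :: "(complex mat \<Rightarrow> complex mat) \<Rightarrow> nat list \<Rightarrow> nat list \<Rightarrow> nat \<Rightarrow> complex mat \<Rightarrow> complex mat" where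
  "with_maxent M ns ms d X = tensor_id M (sum_list ns * d) (sum_list ms) d (kron X (maxent d))"

lemma with_maxent_mat_unit_index:
  assumes linM: "linear_on (ampl ns d) M" and intoM: "\<forall>X\<in>fdalg (ampl ns d). M X \<in> fdalg ms"
    and rc: "(r,c) \<in> block_entries ns" and w: "w < sum_list ms * d" "w' < sum_list ms * d"
  shows "with_maxent M ns ms d (mat_unit (sum_list ns) r c) $$ (w,w') =
     (1 / of_nat d) * M (mat_unit (sum_list ns * d) (r*d + w mod d) (c*d + w' mod d)) $$ (w div d, w' div d)"
proof -
  let ?A = "sum_list ns" and ?B = "sum_list ms"
  have d: "0 < d" using w by (metis mult_0_right not_gr_zero not_less_zero)
  let ?s = "w mod d" and ?t = "w' mod d"
  have st: "?s < d" "?t < d" using d by auto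
  have inner: "mat (?A*d) (?A*d) (\<lambda>(i, j). kron (mat_unit ?A r c) (maxent d) $$ (i * d + ?s, j * d + ?t))
     = (1 / of_nat d) \<cdot>\<^sub>m mat_unit (?A*d) (r*d + ?s) (c*d + ?t)"
  proof (rule eq_matI)
    fix i j assume ij: "i < dim_row ((1 / of_nat d) \<cdot>\<^sub>m mat_unit (?A*d) (r*d + ?s) (c*d + ?t))"
        "j < dim_col ((1 / of_nat d) \<cdot>\<^sub>m mat_unit (?A*d) (r*d + ?s) (c*d + ?t))"
    then have ij': "i < ?A*d" "j < ?A*d" by (auto simp: mat_unit_def)
    have dv: "i div d < ?A" "j div d < ?A" using ij' d by (auto simp: div_less_iff_less_mult)
    have e1: "(i div d = r \<and> i mod d = ?s) \<longleftrightarrow> i = r*d + ?s"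
      by (rule div_mod_eq_iff_eq_mult_add[OF st(1)])
    have e2: "(j div d = c \<and> j mod d = ?t) \<longleftrightarrow> j = c*d + ?t"
      by (rule div_mod_eq_iff_eq_mult_add[OF st(2)])
    show "mat (?A*d) (?A*d) (\<lambda>(i, j). kron (mat_unit ?A r c) (maxent d) $$ (i * d + ?s, j * d + ?t)) $$ (i,j)
       = ((1 / of_nat d) \<cdot>\<^sub>m mat_unit (?A*d) (r*d + ?s) (c*d + ?t)) $$ (i,j)"
      using ij' dv st
      apply (simp add: kron_maxent_index[of _ ?A] mat_unit_def)
      using e1 e2 by auto
  qed (auto simp: mat_unit_def)
  have mu: "mat_unit (?A*d) (r*d + ?s) (c*d + ?t) \<in> fdalg (ampl ns d)"
    using mat_unit_fdalg[OF block_entries_ampl_mem[OF rc st]] by (simp add: sum_list_ampl)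
  have into': "\<forall>X\<in>fdalg (ampl ns d). M X \<in> carrier_mat ?B ?B" using intoM fdalg_carrier by blast
  have wd: "w div d < ?B" "w' div d < ?B" using w d by (auto simp: div_less_iff_less_mult)
  show ?thesis
    unfolding with_maxent_def tensor_id_index[OF w] inner
    by (rule linear_on_smult_index[OF linM mu into' wd])
qed

lemma with_maxent_mat_unit_fdalg:
  assumes linM: "linear_on (ampl ns d) M" and intoM: "\<forall>X\<in>fdalg (ampl ns d). M X \<in> fdalg ms"
    and rc: "(r,c) \<in> block_entries ns" and d: "0 < d"
  shows "with_maxent M ns ms d (mat_unit (sum_list ns) r c) \<in> fdalg (ampl ms d)"
proof -
  let ?B = "sum_list ms"
  have "with_maxent M ns ms d (mat_unit (sum_list ns) r c) \<in> carrier_mat (?B*d) (?B*d)"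
    unfolding with_maxent_def tensor_id_def by simp
  moreover have "with_maxent M ns ms d (mat_unit (sum_list ns) r c) $$ (w,w') = 0"
    if w: "w < ?B*d" "w' < ?B*d" and ns: "\<not> same_block (ampl ms d) w w'" for w w'
  proof -
    have wd: "w div d < ?B" "w' div d < ?B" using w d by (auto simp: div_less_iff_less_mult)
    have ns': "\<not> same_block ms (w div d) (w' div d)" using ns same_block_ampl[OF d] by blast
    have mu: "mat_unit (sum_list ns * d) (r*d + w mod d) (c*d + w' mod d) \<in> fdalg (ampl ns d)"
      using mat_unit_fdalg[OF block_entries_ampl_mem[OF rc, of "w mod d" d "w' mod d"]] d by (simp add: sum_list_ampl)
    show ?thesis unfolding with_maxent_mat_unit_index[OF linM intoM rc w]
      using fdalg_off_block[OF intoM[rule_format, OF mu] wd ns'] by simp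
  qed
  ultimately show ?thesis unfolding fdalg_def by (simp add: sum_list_ampl)
qed

lemma diag_sum_with_maxent:
  assumes d: "0 < d"
    and linM: "linear_on (ampl ns d) M" and intoM: "\<forall>X\<in>fdalg (ampl ns d). M X \<in> fdalg ms"
    and linN: "linear_on (ampl ms d) N" and intoN: "\<forall>X\<in>fdalg (ampl ms d). N X \<in> fdalg ns"
  shows "(\<Sum>(r,c)\<in>block_entries ns. N (with_maxent M ns ms d (mat_unit (sum_list ns) r c)) $$ (r,c)) =
    (\<Sum>(r,c)\<in>block_entries ns. \<Sum>(U,V)\<in>block_entries ms. \<Sum>s<d. \<Sum>t<d.
        (1 / of_nat d) * M (mat_unit (sum_list ns * d) (r*d+s) (c*d+t)) $$ (U,V) *
        N (mat_unit (sum_list ms * d) (U*d+s) (V*d+t)) $$ (r,c))"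
proof (rule sum.cong[OF refl], clarify)
  fix r c assume rc: "(r,c) \<in> block_entries ns"
  let ?A = "sum_list ns" and ?B = "sum_list ms"
  have rcl: "r < ?A" "c < ?A" using rc unfolding block_entries_def by auto
  have intoN': "\<forall>X\<in>fdalg (ampl ms d). N X \<in> carrier_mat ?A ?A" using intoN fdalg_carrier by blast
  have "N (with_maxent M ns ms d (mat_unit ?A r c)) $$ (r,c) =
     (\<Sum>w\<in>block_entries (ampl ms d). with_maxent M ns ms d (mat_unit ?A r c) $$ w * N (mat_unit (sum_list (ampl ms d)) (fst w) (snd w)) $$ (r,c))"
    by (rule linear_on_index_expansion[OF linN intoN' with_maxent_mat_unit_fdalg[OF linM intoM rc d] rcl])
  also have "\<dots> = (\<Sum>(U,V)\<in>block_entries ms. \<Sum>s<d. \<Sum>t<d.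
        with_maxent M ns ms d (mat_unit ?A r c) $$ (U*d+s, V*d+t) * N (mat_unit (?B*d) (U*d+s) (V*d+t)) $$ (r,c))"
    by (subst sum_block_entries_ampl[OF d]) (simp add: sum_list_ampl)
  also have "\<dots> = (\<Sum>(U,V)\<in>block_entries ms. \<Sum>s<d. \<Sum>t<d.
        (1 / of_nat d) * M (mat_unit (?A * d) (r*d+s) (c*d+t)) $$ (U,V) *
        N (mat_unit (?B * d) (U*d+s) (V*d+t)) $$ (r,c))"
  proof (rule sum.cong[OF refl], clarify, rule sum.cong[OF refl], rule sum.cong[OF refl])
    fix U V s t assume UV: "(U,V) \<in> block_entries ms" and s: "s \<in> {..<d}" and t: "t \<in> {..<d}"
    have w: "U*d+s < ?B*d" "V*d+t < ?B*d"
      using block_entries_ampl_mem[OF UV, of s d t] s t unfolding block_entries_def by (auto simp: sum_list_ampl)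
    show "with_maxent M ns ms d (mat_unit ?A r c) $$ (U*d+s, V*d+t) * N (mat_unit (?B*d) (U*d+s) (V*d+t)) $$ (r,c) =
        (1 / of_nat d) * M (mat_unit (?A * d) (r*d+s) (c*d+t)) $$ (U,V) *
        N (mat_unit (?B * d) (U*d+s) (V*d+t)) $$ (r,c)"
      unfolding with_maxent_mat_unit_index[OF linM intoM rc w] using s t by simp
  qed
  finally show "N (with_maxent M ns ms d (mat_unit ?A r c)) $$ (r,c) = (\<Sum>(U,V)\<in>block_entries ms. \<Sum>s<d. \<Sum>t<d.
        (1 / of_nat d) * M (mat_unit (?A * d) (r*d+s) (c*d+t)) $$ (U,V) *
        N (mat_unit (?B * d) (U*d+s) (V*d+t)) $$ (r,c))" .
qed

lemma card_block_entries_eq_sum_diag: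
  assumes "\<forall>\<rho> \<in> fdalg ns. T \<rho> = \<rho>"
  shows "of_nat (card (block_entries ns)) = (\<Sum>(r,c)\<in>block_entries ns. T (mat_unit (sum_list ns) r c) $$ (r,c))"
proof -
  have "(\<Sum>(r,c)\<in>block_entries ns. T (mat_unit (sum_list ns) r c) $$ (r,c)) = (\<Sum>(r,c)\<in>block_entries ns. 1)"
  proof (rule sum.cong[OF refl], clarify)
    fix r c assume rc: "(r,c) \<in> block_entries ns"
    then show "T (mat_unit (sum_list ns) r c) $$ (r,c) = 1"
      using assms mat_unit_fdalg[OF rc] by (simp add: mat_unit_diag block_entries_def)
  qed
  then show ?thesis by simp
qed

lemma card_block_entries_eq_if_ent_invertible:
  assumes d: "0 < d" and ei: "ent_invertible ns ms d (maxent d) M"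
  shows "card (block_entries ns) = card (block_entries ms)"
proof -
  obtain N where chM: "channel (ampl ns d) ms M" and chN: "channel (ampl ms d) ns N"
    and NM: "\<forall>\<rho> \<in> fdalg ns. N (with_maxent M ns ms d \<rho>) = \<rho>"
    and MN: "\<forall>\<sigma> \<in> fdalg ms. M (with_maxent N ms ns d \<sigma>) = \<sigma>"
    using ei unfolding ent_invertible_def with_maxent_def swap_state_maxent by blast
  note linM = channel_linear_on[OF chM] and intoM = channel_fdalg[OF chM]
  note linN = channel_linear_on[OF chN] and intoN = channel_fdalg[OF chN]
  let ?A = "sum_list ns" and ?B = "sum_list ms"
  have "of_nat (card (block_entries ns)) =
      (\<Sum>(r,c)\<in>block_entries ns. N (with_maxent M ns ms d (mat_unit ?A r c)) $$ (r,c))"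
    using NM by (rule card_block_entries_eq_sum_diag)
  also have "\<dots> = (\<Sum>(r,c)\<in>block_entries ns. \<Sum>(U,V)\<in>block_entries ms. \<Sum>s<d. \<Sum>t<d.
        (1 / of_nat d) * M (mat_unit (?A * d) (r*d+s) (c*d+t)) $$ (U,V) *
        N (mat_unit (?B * d) (U*d+s) (V*d+t)) $$ (r,c))"
    by (rule diag_sum_with_maxent[OF d linM intoM linN intoN])
  also have "\<dots> = (\<Sum>(U,V)\<in>block_entries ms. \<Sum>(r,c)\<in>block_entries ns. \<Sum>s<d. \<Sum>t<d.
        (1 / of_nat d) * N (mat_unit (?B * d) (U*d+s) (V*d+t)) $$ (r,c) *
        M (mat_unit (?A * d) (r*d+s) (c*d+t)) $$ (U,V))"
    unfolding split_beta by (subst sum.swap) (simp add: ac_simps)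
  also have "\<dots> = (\<Sum>(U,V)\<in>block_entries ms. M (with_maxent N ms ns d (mat_unit ?B U V)) $$ (U,V))"
    by (rule diag_sum_with_maxent[OF d linN intoN linM intoM, symmetric])
  also have "\<dots> = of_nat (card (block_entries ms))"
    using MN by (rule card_block_entries_eq_sum_diag[symmetric])
  finally show ?thesis by (simp only: of_nat_eq_iff)
qed

section \<open>Clock and shift matrices\<close>

definition unit_root :: "nat \<Rightarrow> complex" where
  "unit_root n = cis (2 * pi / real n)"

(* entry (a0, a) of X^p Z^q on C^n, for the shift X|a> = |a+1> and the clock Z|a> = \<omega>^a |a>,
   where \<omega> = unit_root n *)
definition weyl :: "nat \<Rightarrow> nat \<Rightarrow> nat \<Rightarrow> nat \<Rightarrow> nat \<Rightarrow> complex" where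
  "weyl n p q a0 a = (if a0 = (a + p) mod n then unit_root n ^ (q * a) else 0)"

lemma unit_root_power: "unit_root n ^ k = cis (real k * (2 * pi / real n))"
  unfolding unit_root_def by (simp add: DeMoivre)

lemma unit_root_power_self: "0 < n \<Longrightarrow> unit_root n ^ n = 1"
  unfolding unit_root_power by simp

lemma unit_root_power_mult_self: "0 < n \<Longrightarrow> unit_root n ^ (k * n) = 1"
  by (simp add: power_mult mult.commute[of k n] unit_root_power_self)

lemma unit_root_power_neq_1:
  assumes n: "0 < n" and nd: "\<not> n dvd k"
  shows "unit_root n ^ k \<noteq> 1"
proof
  assume "unit_root n ^ k = 1"
  then have "Re (unit_root n ^ k) = 1" by simp
  then have "cos (real k * (2 * pi / real n)) = 1"
    unfolding unit_root_power by simp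
  then obtain m :: int where m: "real k * (2 * pi / real n) = real_of_int m * 2 * pi"
    using cos_one_2pi_int by blast
  then have "real k = real_of_int m * real n" using n by (simp add: field_simps)
  then have "real_of_int (int k) = real_of_int (m * int n)" by simp
  then have "int k = m * int n" using of_int_eq_iff by blast
  then have "int n dvd int k" by simp
  then show False using nd by simp
qed

lemma sum_unit_root_powers:
  assumes n: "0 < n"
  shows "(\<Sum>a<n. (unit_root n ^ k) ^ a) = (if n dvd k then of_nat n else 0)"
proof (cases "n dvd k")
  case True
  then obtain j where "k = n * j" by blast
  then have "unit_root n ^ k = 1" using unit_root_power_mult_self[OF n, of j] by (simp add: mult.commute)
  then show ?thesis using True by simp
next
  case False
  have x: "unit_root n ^ k \<noteq> 1" by (rule unit_root_power_neq_1[OF n False])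
  have "(unit_root n ^ k) ^ n = 1" using unit_root_power_mult_self[OF n, of k] by (simp add: power_mult[symmetric])
  then show ?thesis using geometric_sum[OF x, of n] False by simp
qed

lemma cnj_unit_root_power_mult[simp]:
  "cnj (unit_root n) ^ k * unit_root n ^ k = 1" "unit_root n ^ k * cnj (unit_root n) ^ k = 1"
proof -
  have "norm (unit_root n ^ k) = 1" unfolding unit_root_power by simp
  then have "unit_root n ^ k * cnj (unit_root n ^ k) = 1"
    using complex_norm_square[of "unit_root n ^ k"] by simp
  then show "cnj (unit_root n) ^ k * unit_root n ^ k = 1" "unit_root n ^ k * cnj (unit_root n) ^ k = 1"
    by (simp_all add: mult.commute)
qed

lemma cnj_unit_root_power:
  assumes n: "0 < n" and y: "y \<le> n"
  shows "cnj (unit_root n) ^ (k*y) = unit_root n ^ (k*(n-y))"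
proof -
  have ky: "k*y \<le> k*n" using y by simp
  have "k*y + k*(n-y) = k*n" using ky by (simp add: diff_mult_distrib2)
  then have "unit_root n ^ (k*y) * unit_root n ^ (k*(n-y)) = unit_root n ^ (k*n)"
    by (simp add: power_add[symmetric])
  also have "\<dots> = 1" using unit_root_power_mult_self[OF n] by (simp add: mult.commute)
  finally have e: "unit_root n ^ (k*y) * unit_root n ^ (k*(n-y)) = 1" .
  have "cnj (unit_root n) ^ (k*y) = cnj (unit_root n) ^ (k*y) * (unit_root n ^ (k*y) * unit_root n ^ (k*(n-y)))" using e by simp
  also have "\<dots> = unit_root n ^ (k*(n-y))" using cnj_unit_root_power_mult(1)[of n "k*y"] by (simp add: mult.assoc[symmetric])
  finally show ?thesis .
qed

lemma sum_unit_root_characters: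
  assumes n: "0 < n" and xy: "x < n" "y < n"
  shows "(\<Sum>k<n. unit_root n ^ (k*x) * cnj (unit_root n) ^ (k*y)) = (if x = y then of_nat n else 0)"
proof -
  have "(\<Sum>k<n. unit_root n ^ (k*x) * cnj (unit_root n) ^ (k*y)) = (\<Sum>k<n. (unit_root n ^ (x + (n - y))) ^ k)"
  proof (rule sum.cong[OF refl])
    fix k assume "k \<in> {..<n}"
    have "unit_root n ^ (k*x) * cnj (unit_root n) ^ (k*y) = unit_root n ^ (k*x) * unit_root n ^ (k*(n-y))"
      using cnj_unit_root_power[OF n, of y k] xy by simp
    also have "\<dots> = unit_root n ^ (k*x + k*(n-y))" by (simp add: power_add)
    also have "\<dots> = (unit_root n ^ (x + (n - y))) ^ k" by (simp add: power_mult[symmetric] algebra_simps)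
    finally show "unit_root n ^ (k*x) * cnj (unit_root n) ^ (k*y) = (unit_root n ^ (x + (n - y))) ^ k" .
  qed
  also have "\<dots> = (if n dvd (x + (n - y)) then of_nat n else 0)" by (rule sum_unit_root_powers[OF n])
  also have "(n dvd (x + (n - y))) \<longleftrightarrow> x = y"
  proof
    assume "n dvd (x + (n - y))"
    moreover have "0 < x + (n - y)" "x + (n - y) < 2 * n" using xy by auto
    ultimately have "x + (n - y) = n"
    proof -
      assume dv: "n dvd (x + (n - y))" and b: "0 < x + (n - y)" "x + (n - y) < 2 * n"
      obtain k where k: "x + (n - y) = n * k" using dv by blast
      have "k \<noteq> 0" using k b by auto
      moreover have "n * k < n * 2" using k b by (simp add: mult.commute)
      then have "k < 2" by simp
      ultimately have "k = 1" by simp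
      then show ?thesis using k by simp
    qed
    then show "x = y" using xy by simp
  qed (use xy in simp)
  finally show ?thesis by simp
qed

lemma add_mod_inj: "(x::nat) < n \<Longrightarrow> y < n \<Longrightarrow> (x + c) mod n = (y + c) mod n \<Longrightarrow> x = y"
proof (rule ccontr)
  assume xy: "x < n" "y < n" and e: "(x + c) mod n = (y + c) mod n" and ne: "x \<noteq> y"
  have "int ((x + c) mod n) = int ((y + c) mod n)" using e by simp
  then have "(int x + int c) mod int n = (int y + int c) mod int n" by (simp add: of_nat_mod)
  then have "int n dvd (int x + int c) - (int y + int c)" by (simp add: mod_eq_dvd_iff)
  then have d: "int n dvd int x - int y" by simp
  have "int x - int y \<noteq> 0" using ne by simp
  then have "\<bar>int n\<bar> \<le> \<bar>int x - int y\<bar>" using dvd_imp_le_int d by blast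
  then show False using xy by linarith
qed

lemma sum_add_mod_reindex:
  fixes g :: "nat \<Rightarrow> 'a::comm_monoid_add"
  assumes n: "0 < n"
  shows "(\<Sum>x<n. g ((x + c) mod n)) = (\<Sum>y<n. g y)"
proof -
  have inj: "inj_on (\<lambda>x. (x + c) mod n) {..<n}"
    by (rule inj_onI) (use add_mod_inj in auto)
  have im: "(\<lambda>x. (x + c) mod n) ` {..<n} = {..<n}"
    using inj n by (intro endo_inj_surj) auto
  show ?thesis using sum.reindex[OF inj, of g] im by simp
qed

lemma weyl_rows_orthonormal:
  assumes n: "0 < n" and a: "a0 < n" "a1 < n"
  shows "(\<Sum>a<n. weyl n p q a0 a * cnj (weyl n p q a1 a)) = (if a0 = a1 then 1 else 0)"
proof -
  have "(\<Sum>a<n. weyl n p q a0 a * cnj (weyl n p q a1 a)) =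
        (\<Sum>a<n. (\<lambda>y. if y = a0 \<and> y = a1 then 1 else 0) ((a + p) mod n))"
    by (intro sum.cong refl) (auto simp: weyl_def)
  also have "\<dots> = (\<Sum>y<n. if y = a0 \<and> y = a1 then 1 else 0)" by (rule sum_add_mod_reindex[OF n])
  also have "\<dots> = (if a0 = a1 then 1 else 0)" using a(1) by (auto simp: sum_delta_both_eq)
  finally show ?thesis .
qed

lemma weyl_columns_orthonormal:
  assumes n: "0 < n" and a: "a < n" "a' < n" and p: "p < n"
  shows "(\<Sum>a0<n. cnj (weyl n p q a0 a) * weyl n p q a0 a') = (if a = a' then 1 else 0)"
proof -
  have "(\<Sum>a0<n. cnj (weyl n p q a0 a) * weyl n p q a0 a') =
     (\<Sum>a0<n. if a0 = (a + p) mod n then (if (a + p) mod n = (a' + p) mod n then cnj (unit_root n) ^ (q*a) * unit_root n ^ (q*a') else 0) else 0)"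
    by (intro sum.cong refl) (auto simp: weyl_def)
  also have "\<dots> = (if (a + p) mod n = (a' + p) mod n then cnj (unit_root n) ^ (q*a) * unit_root n ^ (q*a') else 0)"
    using n by (simp add: sum.delta)
  also have "\<dots> = (if a = a' then 1 else 0)"
    using add_mod_inj[OF a, of p] by auto
  finally show ?thesis .
qed

lemma weyl_orthogonal:
  assumes n: "0 < n" and pq: "p < n" "q < n" "p' < n" "q' < n"
  shows "(\<Sum>a0<n. \<Sum>a<n. cnj (weyl n p q a0 a) * weyl n p' q' a0 a) = (if p = p' \<and> q = q' then of_nat n else 0)"
proof -
  have "(\<Sum>a0<n. \<Sum>a<n. cnj (weyl n p q a0 a) * weyl n p' q' a0 a) =
     (\<Sum>a<n. \<Sum>a0<n. cnj (weyl n p q a0 a) * weyl n p' q' a0 a)" by (rule sum.swap)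
  also have "\<dots> = (\<Sum>a<n. if (a + p) mod n = (a + p') mod n then unit_root n ^ (a*q') * cnj (unit_root n) ^ (a*q) else 0)"
  proof (rule sum.cong[OF refl])
    fix a assume "a \<in> {..<n}"
    have "(\<Sum>a0<n. cnj (weyl n p q a0 a) * weyl n p' q' a0 a) =
        (\<Sum>a0<n. if a0 = (a + p) mod n then (if (a + p) mod n = (a + p') mod n then unit_root n ^ (a*q') * cnj (unit_root n) ^ (a*q) else 0) else 0)"
      by (intro sum.cong refl) (auto simp: weyl_def mult.commute)
    also have "\<dots> = (if (a + p) mod n = (a + p') mod n then unit_root n ^ (a*q') * cnj (unit_root n) ^ (a*q) else 0)"
      using n by (simp add: sum.delta)
    finally show "(\<Sum>a0<n. cnj (weyl n p q a0 a) * weyl n p' q' a0 a) = \<dots>" .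
  qed
  also have "\<dots> = (\<Sum>a<n. if p = p' then unit_root n ^ (a*q') * cnj (unit_root n) ^ (a*q) else 0)"
  proof (rule sum.cong[OF refl])
    fix a assume "a \<in> {..<n}"
    have "(a + p) mod n = (a + p') mod n \<longleftrightarrow> p = p'"
      using add_mod_inj[OF pq(1) pq(3), of a] by (auto simp: add.commute)
    then show "(if (a + p) mod n = (a + p') mod n then unit_root n ^ (a*q') * cnj (unit_root n) ^ (a*q) else 0) =
        (if p = p' then unit_root n ^ (a*q') * cnj (unit_root n) ^ (a*q) else 0)" by simp
  qed
  also have "\<dots> = (if p = p' \<and> q = q' then of_nat n else 0)"
    using sum_unit_root_characters[OF n pq(4) pq(2)] by (cases "p = p'") auto
  finally show ?thesis .
qed

lemma weyl_complete:
  assumes n: "0 < n" and a: "a0 < n" "a < n" "a0' < n" "a' < n"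
  shows "(\<Sum>p<n. \<Sum>q<n. weyl n p q a0 a * cnj (weyl n p q a0' a')) =
      (if a0 = a0' \<and> a = a' then of_nat n else 0)"
proof -
  have "(\<Sum>p<n. \<Sum>q<n. weyl n p q a0 a * cnj (weyl n p q a0' a')) =
     (\<Sum>p<n. if a0 = (a + p) mod n \<and> a0' = (a' + p) mod n then (if a = a' then of_nat n else 0) else 0)"
  proof (rule sum.cong[OF refl])
    fix p assume "p \<in> {..<n}"
    have "(\<Sum>q<n. weyl n p q a0 a * cnj (weyl n p q a0' a')) =
       (if a0 = (a + p) mod n \<and> a0' = (a' + p) mod n then (\<Sum>q<n. unit_root n ^ (q*a) * cnj (unit_root n) ^ (q*a')) else 0)"
      by (auto simp: weyl_def)
    also have "\<dots> = (if a0 = (a + p) mod n \<and> a0' = (a' + p) mod n then (if a = a' then of_nat n else 0) else 0)"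
      using sum_unit_root_characters[OF n a(2) a(4)] by simp
    finally show "(\<Sum>q<n. weyl n p q a0 a * cnj (weyl n p q a0' a')) = \<dots>" .
  qed
  also have "\<dots> = (if a0 = a0' \<and> a = a' then of_nat n else 0)"
  proof (cases "a = a'")
    case True
    have "(\<Sum>p<n. if a0 = (a + p) mod n \<and> a0' = (a' + p) mod n then (if a = a' then of_nat n else 0) else 0)
        = (\<Sum>p<n. (\<lambda>y. if y = a0 \<and> y = a0' then of_nat n else 0) ((p + a) mod n))"
      using True by (intro sum.cong refl) (auto simp: add.commute)
    also have "\<dots> = (\<Sum>y<n. if y = a0 \<and> y = a0' then of_nat n else 0)"
      by (rule sum_add_mod_reindex[OF n])
    also have "\<dots> = (if a0 = a0' then of_nat n else 0)"
      using a(1) by (auto simp: sum_delta_both_eq)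
    finally show ?thesis using True by simp
  next
    case False
    then show ?thesis by simp
  qed
  finally show ?thesis .
qed

section \<open>Weyl labels\<close>

definition weyl_labels :: "nat list \<Rightarrow> (nat \<times> nat \<times> nat) set" where
  "weyl_labels ns = (SIGMA i:{..<length ns}. {..<ns!i} \<times> {..<ns!i})"

lemma finite_weyl_labels: "finite (weyl_labels ns)"
  unfolding weyl_labels_def by auto

lemma weyl_labels_iff: "x \<in> weyl_labels ns \<longleftrightarrow> fst x < length ns \<and> fst (snd x) < ns ! fst x \<and> snd (snd x) < ns ! fst x"
  unfolding weyl_labels_def by (cases x) auto

lemma sum_weyl_labels:
  "(\<Sum>x\<in>weyl_labels ns. F x) = (\<Sum>i<length ns. \<Sum>p<ns!i. \<Sum>q<ns!i. F (i,p,q))"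
proof -
  have "(\<Sum>i<length ns. \<Sum>p<ns!i. \<Sum>q<ns!i. F (i,p,q)) = (\<Sum>i<length ns. \<Sum>pq\<in>{..<ns!i} \<times> {..<ns!i}. F (i,pq))"
    by (simp add: sum.cartesian_product split_beta)
  also have "\<dots> = (\<Sum>(i,pq)\<in>weyl_labels ns. F (i,pq))"
    unfolding weyl_labels_def by (rule sum.Sigma) auto
  finally show ?thesis by (simp add: split_beta)
qed

lemma card_weyl_labels: "card (weyl_labels ns) = card (block_entries ns)"
proof -
  let ?\<phi> = "\<lambda>(i,p,q). (blk_off ns i + p, blk_off ns i + q)"
  have "bij_betw ?\<phi> (weyl_labels ns) (block_entries ns)"
  proof (rule bij_betw_byWitness[where f'="\<lambda>(r,c). (block_of ns r, r - blk_off ns (block_of ns r), c - blk_off ns (block_of ns r))"])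
    show "\<forall>a\<in>weyl_labels ns. (\<lambda>(r,c). (block_of ns r, r - blk_off ns (block_of ns r), c - blk_off ns (block_of ns r))) (?\<phi> a) = a"
    proof
      fix a assume a: "a \<in> weyl_labels ns"
      obtain i p q where aa: "a = (i,p,q)" by (cases a) auto
      have "in_block ns i (blk_off ns i + p)" using a aa by (auto simp: weyl_labels_iff in_block_def)
      then have "block_of ns (blk_off ns i + p) = i" by (rule block_of_eqI)
      then show "(\<lambda>(r,c). (block_of ns r, r - blk_off ns (block_of ns r), c - blk_off ns (block_of ns r))) (?\<phi> a) = a"
        using aa by simp
    qed
    show "\<forall>a'\<in>block_entries ns. ?\<phi> ((\<lambda>(r,c). (block_of ns r, r - blk_off ns (block_of ns r), c - blk_off ns (block_of ns r))) a') = a'"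
    proof
      fix a' assume a': "a' \<in> block_entries ns"
      obtain r c where rc: "a' = (r,c)" by (cases a') auto
      obtain i where i: "in_block ns i r" "in_block ns i c" using a' rc unfolding block_entries_def same_block_iff_in_block by blast
      have "block_of ns r = i" by (rule block_of_eqI[OF i(1)])
      then show "?\<phi> ((\<lambda>(r,c). (block_of ns r, r - blk_off ns (block_of ns r), c - blk_off ns (block_of ns r))) a') = a'"
        using i rc by (auto simp: in_block_def)
    qed
    show "?\<phi> ` weyl_labels ns \<subseteq> block_entries ns"
    proof clarify
      fix i p q assume "(i,p,q) \<in> weyl_labels ns"
      then have "in_block ns i (blk_off ns i + p)" "in_block ns i (blk_off ns i + q)" by (auto simp: weyl_labels_iff in_block_def)
      then show "(blk_off ns i + p, blk_off ns i + q) \<in> block_entries ns"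
        unfolding block_entries_def same_block_iff_in_block using in_block_less by blast
    qed
    show "(\<lambda>(r,c). (block_of ns r, r - blk_off ns (block_of ns r), c - blk_off ns (block_of ns r))) ` block_entries ns \<subseteq> weyl_labels ns"
    proof clarify
      fix r c assume rc: "(r,c) \<in> block_entries ns"
      obtain i where i: "in_block ns i r" "in_block ns i c" using rc unfolding block_entries_def same_block_iff_in_block by blast
      have "block_of ns r = i" by (rule block_of_eqI[OF i(1)])
      then show "(block_of ns r, r - blk_off ns (block_of ns r), c - blk_off ns (block_of ns r)) \<in> weyl_labels ns"
        using i by (auto simp: weyl_labels_iff in_block_def)
    qed
  qed
  then show ?thesis by (rule bij_betw_same_card)
qed

section \<open>Maps in Kraus form\<close>

definition kraus_map :: "nat \<Rightarrow> nat \<Rightarrow> 'k set \<Rightarrow> ('k \<Rightarrow> nat \<Rightarrow> nat \<Rightarrow> complex) \<Rightarrow> complex mat \<Rightarrow> complex mat" where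
  "kraus_map m n I K Y = mat m m (\<lambda>(u,v). \<Sum>\<kappa>\<in>I. \<Sum>s<n. \<Sum>t<n. K \<kappa> u s * Y $$ (s,t) * cnj (K \<kappa> v t))"

lemma kraus_map_carrier: "kraus_map m n I K Y \<in> carrier_mat m m"
  unfolding kraus_map_def by simp

lemma kraus_map_linear:
  assumes "X \<in> carrier_mat n n" "Y \<in> carrier_mat n n"
  shows "kraus_map m n I K (a \<cdot>\<^sub>m X + b \<cdot>\<^sub>m Y) = a \<cdot>\<^sub>m kraus_map m n I K X + b \<cdot>\<^sub>m kraus_map m n I K Y"
proof (rule eq_matI)
  fix u v assume uv: "u < dim_row (a \<cdot>\<^sub>m kraus_map m n I K X + b \<cdot>\<^sub>m kraus_map m n I K Y)"
    "v < dim_col (a \<cdot>\<^sub>m kraus_map m n I K X + b \<cdot>\<^sub>m kraus_map m n I K Y)"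
  then have uv': "u < m" "v < m" by (auto simp: kraus_map_def)
  have e: "(a \<cdot>\<^sub>m X + b \<cdot>\<^sub>m Y) $$ (s,t) = a * X $$ (s,t) + b * Y $$ (s,t)" if "s < n" "t < n" for s t
    using assms that by simp
  show "kraus_map m n I K (a \<cdot>\<^sub>m X + b \<cdot>\<^sub>m Y) $$ (u,v) = (a \<cdot>\<^sub>m kraus_map m n I K X + b \<cdot>\<^sub>m kraus_map m n I K Y) $$ (u,v)"
    using uv' by (simp add: kraus_map_def e sum_distrib_left sum.distrib algebra_simps)
qed (auto simp: kraus_map_def)

lemma mtrace_kraus_map:
  assumes TP: "\<And>s t. s < n \<Longrightarrow> t < n \<Longrightarrow> (\<Sum>\<kappa>\<in>I. \<Sum>u<m. cnj (K \<kappa> u t) * K \<kappa> u s) = (if s = t then 1 else 0)"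
  shows "mtrace (kraus_map m n I K Y) = (\<Sum>s<n. Y $$ (s,s))"
proof -
  have "mtrace (kraus_map m n I K Y) = (\<Sum>u<m. \<Sum>\<kappa>\<in>I. \<Sum>s<n. \<Sum>t<n. K \<kappa> u s * Y $$ (s,t) * cnj (K \<kappa> u t))"
    unfolding mtrace_def kraus_map_def by simp
  also have "\<dots> = (\<Sum>s<n. \<Sum>t<n. \<Sum>\<kappa>\<in>I. \<Sum>u<m. K \<kappa> u s * Y $$ (s,t) * cnj (K \<kappa> u t))"
    by (rule sum_nested4_rotate)
  also have "\<dots> = (\<Sum>s<n. \<Sum>t<n. Y $$ (s,t) * (\<Sum>\<kappa>\<in>I. \<Sum>u<m. cnj (K \<kappa> u t) * K \<kappa> u s))"
    by (simp add: sum_distrib_left mult_ac)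
  also have "\<dots> = (\<Sum>s<n. \<Sum>t<n. if t = s then Y $$ (s,t) else 0)"
    by (intro sum.cong refl) (simp add: TP)
  also have "\<dots> = (\<Sum>s<n. Y $$ (s,s))" by (simp add: sum.delta)
  finally show ?thesis .
qed

lemma kraus_map_fdalg:
  assumes supp: "\<And>\<kappa> u v s t. \<kappa> \<in> I \<Longrightarrow> u < sum_list ms \<Longrightarrow> v < sum_list ms \<Longrightarrow>
       K \<kappa> u s \<noteq> 0 \<Longrightarrow> K \<kappa> v t \<noteq> 0 \<Longrightarrow> same_block ms u v"
  shows "kraus_map (sum_list ms) n I K Y \<in> fdalg ms"
  unfolding fdalg_def
proof (intro CollectI conjI allI impI)
  show "kraus_map (sum_list ms) n I K Y \<in> carrier_mat (sum_list ms) (sum_list ms)" by (rule kraus_map_carrier)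
  fix u v assume uv: "u < sum_list ms" "v < sum_list ms" "\<not> same_block ms u v"
  have z: "K \<kappa> u s * Y $$ (s,t) * cnj (K \<kappa> v t) = 0" if "\<kappa> \<in> I" for \<kappa> s t
    using supp[OF that uv(1,2), of s t] uv(3) by auto
  have "(\<Sum>\<kappa>\<in>I. \<Sum>s<n. \<Sum>t<n. K \<kappa> u s * Y $$ (s,t) * cnj (K \<kappa> v t)) = 0"
    by (intro sum.neutral ballI) (simp add: z)
  then show "kraus_map (sum_list ms) n I K Y $$ (u, v) = 0"
    using uv by (simp add: kraus_map_def)
qed

definition kraus_ampl :: "nat \<Rightarrow> ('k \<Rightarrow> nat \<Rightarrow> nat \<Rightarrow> complex) \<Rightarrow> 'k \<Rightarrow> nat \<Rightarrow> nat \<Rightarrow> complex" where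
  "kraus_ampl k K \<kappa> r \<sigma> = (if r mod k = \<sigma> mod k then K \<kappa> (r div k) (\<sigma> div k) else 0)"

lemma kraus_ampl_mult_add: "i' < k \<Longrightarrow> kraus_ampl k K \<kappa> r (s*k+i') = (if r mod k = i' then K \<kappa> (r div k) s else 0)"
  unfolding kraus_ampl_def by simp

lemma sum_kraus_ampl:
  assumes d: "0 < d"
  shows "(\<Sum>w<B*d. Kp w * kraus_ampl d K \<kappa> w \<sigma>) = (\<Sum>u<B. Kp (u*d + \<sigma> mod d) * K \<kappa> u (\<sigma> div d))"
proof -
  have "(\<Sum>w<B*d. Kp w * kraus_ampl d K \<kappa> w \<sigma>) = (\<Sum>u<B. \<Sum>h<d. Kp (u*d+h) * kraus_ampl d K \<kappa> (u*d+h) \<sigma>)"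
    by (rule sum_lessThan_mult)
  also have "\<dots> = (\<Sum>u<B. \<Sum>h<d. if h = \<sigma> mod d then Kp (u*d+h) * K \<kappa> u (\<sigma> div d) else 0)"
    by (intro sum.cong refl) (auto simp: kraus_ampl_def)
  also have "\<dots> = (\<Sum>u<B. Kp (u*d + \<sigma> mod d) * K \<kappa> u (\<sigma> div d))"
    using d by (simp add: sum.delta)
  finally show ?thesis .
qed

lemma tensor_id_kraus_map_index:
  assumes rc: "r < m*k" "c < m*k"
  shows "tensor_id (kraus_map m n I K) n m k Z $$ (r,c) =
    (\<Sum>\<kappa>\<in>I. \<Sum>\<sigma><n*k. \<Sum>\<tau><n*k. kraus_ampl k K \<kappa> r \<sigma> * Z $$ (\<sigma>,\<tau>) * cnj (kraus_ampl k K \<kappa> c \<tau>))"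
proof -
  have k: "0 < k" using rc by (metis mult_0_right not_gr_zero not_less_zero)
  let ?i = "r mod k" and ?j = "c mod k" and ?R = "r div k" and ?C = "c div k"
  have ij: "?i < k" "?j < k" using k by auto
  have R: "?R < m" "?C < m" using rc k by (auto simp: div_less_iff_less_mult)
  have "tensor_id (kraus_map m n I K) n m k Z $$ (r,c) =
     (\<Sum>\<kappa>\<in>I. \<Sum>s<n. \<Sum>t<n. K \<kappa> ?R s * Z $$ (s*k + ?i, t*k + ?j) * cnj (K \<kappa> ?C t))"
    unfolding tensor_id_index[OF rc] kraus_map_def using R by simp
  also have "\<dots> = (\<Sum>\<kappa>\<in>I. \<Sum>s<n. \<Sum>i'<k. \<Sum>t<n. \<Sum>j'<k. kraus_ampl k K \<kappa> r (s*k+i') * Z $$ (s*k+i', t*k+j') * cnj (kraus_ampl k K \<kappa> c (t*k+j')))"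
  proof (rule sum.cong[OF refl], rule sum.cong[OF refl])
    fix \<kappa> s assume "\<kappa> \<in> I" "s \<in> {..<n}"
    have "(\<Sum>i'<k. \<Sum>t<n. \<Sum>j'<k. kraus_ampl k K \<kappa> r (s*k+i') * Z $$ (s*k+i', t*k+j') * cnj (kraus_ampl k K \<kappa> c (t*k+j'))) =
       (\<Sum>i'<k. \<Sum>t<n. \<Sum>j'<k. (if ?i = i' then K \<kappa> ?R s else 0) * Z $$ (s*k+i', t*k+j') * (if ?j = j' then cnj (K \<kappa> ?C t) else 0))"
      by (intro sum.cong refl) (simp add: kraus_ampl_mult_add)
    also have "\<dots> = (\<Sum>i'<k. \<Sum>t<n. (if ?i = i' then K \<kappa> ?R s else 0) * (Z $$ (s*k+i', t*k+?j) * cnj (K \<kappa> ?C t)))"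
      by (intro sum.cong refl, subst sum_delta_mult_right[OF ij(2)], simp add: mult.assoc)
    also have "\<dots> = (\<Sum>i'<k. (if ?i = i' then K \<kappa> ?R s else 0) * (\<Sum>t<n. Z $$ (s*k+i', t*k+?j) * cnj (K \<kappa> ?C t)))"
      by (simp add: sum_distrib_left)
    also have "\<dots> = K \<kappa> ?R s * (\<Sum>t<n. Z $$ (s*k+?i, t*k+?j) * cnj (K \<kappa> ?C t))"
      by (rule sum_delta_mult_left[OF ij(1)])
    also have "\<dots> = (\<Sum>t<n. K \<kappa> ?R s * Z $$ (s*k + ?i, t*k + ?j) * cnj (K \<kappa> ?C t))"
      by (simp add: sum_distrib_left mult.assoc)
    finally show "(\<Sum>t<n. K \<kappa> ?R s * Z $$ (s*k + ?i, t*k + ?j) * cnj (K \<kappa> ?C t)) =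
      (\<Sum>i'<k. \<Sum>t<n. \<Sum>j'<k. kraus_ampl k K \<kappa> r (s*k+i') * Z $$ (s*k+i', t*k+j') * cnj (kraus_ampl k K \<kappa> c (t*k+j')))" by simp
  qed
  also have "\<dots> = (\<Sum>\<kappa>\<in>I. \<Sum>\<sigma><n*k. \<Sum>\<tau><n*k. kraus_ampl k K \<kappa> r \<sigma> * Z $$ (\<sigma>,\<tau>) * cnj (kraus_ampl k K \<kappa> c \<tau>))"
    by (simp add: sum_lessThan_mult)
  finally show ?thesis .
qed

lemma sum_kraus_sandwich:
  fixes A :: "'k \<Rightarrow> nat \<Rightarrow> nat \<Rightarrow> complex" and Z :: "nat \<Rightarrow> nat \<Rightarrow> complex"
  shows "(\<Sum>w<M. \<Sum>w'<M. v1 w * (\<Sum>\<kappa>\<in>I. \<Sum>\<sigma><N. \<Sum>\<tau><N. A \<kappa> w \<sigma> * Z \<sigma> \<tau> * cnj (A \<kappa> w' \<tau>)) * v2 w') =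
    (\<Sum>\<kappa>\<in>I. \<Sum>\<sigma><N. \<Sum>\<tau><N. (\<Sum>w<M. v1 w * A \<kappa> w \<sigma>) * Z \<sigma> \<tau> * (\<Sum>w'<M. cnj (A \<kappa> w' \<tau>) * v2 w'))"
proof -
  have "(\<Sum>w<M. \<Sum>w'<M. v1 w * (\<Sum>\<kappa>\<in>I. \<Sum>\<sigma><N. \<Sum>\<tau><N. A \<kappa> w \<sigma> * Z \<sigma> \<tau> * cnj (A \<kappa> w' \<tau>)) * v2 w') =
     (\<Sum>w<M. \<Sum>w'<M. \<Sum>\<kappa>\<in>I. \<Sum>\<sigma><N. \<Sum>\<tau><N. v1 w * A \<kappa> w \<sigma> * Z \<sigma> \<tau> * cnj (A \<kappa> w' \<tau>) * v2 w')"
    by (simp add: sum_distrib_left sum_distrib_right mult_ac)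
  also have "\<dots> = (\<Sum>\<kappa>\<in>I. \<Sum>\<sigma><N. \<Sum>\<tau><N. \<Sum>w<M. \<Sum>w'<M. v1 w * A \<kappa> w \<sigma> * Z \<sigma> \<tau> * cnj (A \<kappa> w' \<tau>) * v2 w')"
    by (rule sum_nested5_rotate)
  also have "\<dots> = (\<Sum>\<kappa>\<in>I. \<Sum>\<sigma><N. \<Sum>\<tau><N. (\<Sum>w<M. v1 w * A \<kappa> w \<sigma>) * Z \<sigma> \<tau> * (\<Sum>w'<M. cnj (A \<kappa> w' \<tau>) * v2 w'))"
    by (simp add: sum_distrib_left sum_distrib_right mult_ac)
  finally show ?thesis .
qed

lemma kraus_map_completely_positive:
  assumes k: "0 < k" and Z: "psd (n*k) Z"
  shows "psd (m*k) (tensor_id (kraus_map m n I K) n m k Z)"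
  unfolding psd_def
proof (intro conjI allI)
  show "tensor_id (kraus_map m n I K) n m k Z \<in> carrier_mat (m*k) (m*k)" by (simp add: tensor_id_def)
  fix v :: "nat \<Rightarrow> complex"
  let ?T = "tensor_id (kraus_map m n I K) n m k Z"
  define w where "w \<kappa> \<sigma> = (\<Sum>r<m*k. cnj (kraus_ampl k K \<kappa> r \<sigma>) * v r)" for \<kappa> \<sigma>
  (* q \<kappa> is the quadratic form of Z at the vector w \<kappa> = (K_\<kappa> \<otimes> 1)^* v *)
  define q where "q \<kappa> = (\<Sum>\<sigma><n*k. \<Sum>\<tau><n*k. cnj (w \<kappa> \<sigma>) * Z $$ (\<sigma>,\<tau>) * w \<kappa> \<tau>)" for \<kappa>
  have "(\<Sum>r<m*k. \<Sum>c<m*k. cnj (v r) * ?T $$ (r,c) * v c) =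
     (\<Sum>r<m*k. \<Sum>c<m*k. cnj (v r) * (\<Sum>\<kappa>\<in>I. \<Sum>\<sigma><n*k. \<Sum>\<tau><n*k. kraus_ampl k K \<kappa> r \<sigma> * Z $$ (\<sigma>,\<tau>) * cnj (kraus_ampl k K \<kappa> c \<tau>)) * v c)"
    by (intro sum.cong refl) (simp add: tensor_id_kraus_map_index)
  also have "\<dots> = (\<Sum>\<kappa>\<in>I. \<Sum>\<sigma><n*k. \<Sum>\<tau><n*k. (\<Sum>r<m*k. cnj (v r) * kraus_ampl k K \<kappa> r \<sigma>) *
      Z $$ (\<sigma>,\<tau>) * (\<Sum>c<m*k. cnj (kraus_ampl k K \<kappa> c \<tau>) * v c))"
    by (rule sum_kraus_sandwich)
  also have "\<dots> = (\<Sum>\<kappa>\<in>I. q \<kappa>)"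
    unfolding q_def w_def by (simp add: cnj_sum mult.commute)
  finally have eq: "(\<Sum>r<m*k. \<Sum>c<m*k. cnj (v r) * ?T $$ (r,c) * v c) = (\<Sum>\<kappa>\<in>I. q \<kappa>)" .
  have qk: "Im (q \<kappa>) = 0 \<and> 0 \<le> Re (q \<kappa>)" for \<kappa>
    using Z unfolding psd_def q_def by blast
  show "Im (\<Sum>r<m*k. \<Sum>c<m*k. cnj (v r) * ?T $$ (r,c) * v c) = 0"
    unfolding eq Im_sum using qk by simp
  show "0 \<le> Re (\<Sum>r<m*k. \<Sum>c<m*k. cnj (v r) * ?T $$ (r,c) * v c)"
    unfolding eq Re_sum using qk by (simp add: sum_nonneg)
qed

(* entry (s, r1) of K'_\<kappa>' (K_\<kappa> \<otimes> 1) (|r1> \<otimes> \<eta>_d) *)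
definition kraus_pair_coeff :: "nat \<Rightarrow> nat \<Rightarrow> ('j \<Rightarrow> nat \<Rightarrow> nat \<Rightarrow> complex) \<Rightarrow> ('k \<Rightarrow> nat \<Rightarrow> nat \<Rightarrow> complex) \<Rightarrow>
    'j \<Rightarrow> 'k \<Rightarrow> nat \<Rightarrow> nat \<Rightarrow> complex" where
  "kraus_pair_coeff d B K' K \<kappa>' \<kappa> s r1 = (\<Sum>h<d. \<Sum>u<B. K' \<kappa>' s (u*d+h) * K \<kappa> u (r1*d+h))"

lemma kraus_map_with_maxent_index:
  fixes K :: "'k \<Rightarrow> nat \<Rightarrow> nat \<Rightarrow> complex" and K' :: "'j \<Rightarrow> nat \<Rightarrow> nat \<Rightarrow> complex"
  assumes d: "0 < d" and \<rho>: "\<rho> \<in> carrier_mat A A" and r: "r < A" "r' < A"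
  shows "kraus_map A (B*d) I' K' (tensor_id (kraus_map B (A*d) I K) (A*d) B d (kron \<rho> (maxent d))) $$ (r,r') =
    (\<Sum>\<kappa>'\<in>I'. \<Sum>\<kappa>\<in>I. (1 / of_nat d) * (\<Sum>r1<A. \<Sum>r1'<A.
       \<rho> $$ (r1,r1') * kraus_pair_coeff d B K' K \<kappa>' \<kappa> r r1 * cnj (kraus_pair_coeff d B K' K \<kappa>' \<kappa> r' r1')))"
proof -
  let ?X = "kron \<rho> (maxent d)"
  let ?T = "tensor_id (kraus_map B (A*d) I K) (A*d) B d ?X"
  define L where "L \<kappa>' \<kappa> s \<sigma> = (\<Sum>u<B. K' \<kappa>' s (u*d + \<sigma> mod d) * K \<kappa> u (\<sigma> div d))" for \<kappa>' \<kappa> s \<sigma>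
  have L: "(\<Sum>w<B*d. K' \<kappa>' s w * kraus_ampl d K \<kappa> w \<sigma>) = L \<kappa>' \<kappa> s \<sigma>" for \<kappa>' \<kappa> s \<sigma>
    unfolding L_def by (rule sum_kraus_ampl[OF d])
  have cnj_L: "(\<Sum>w<B*d. cnj (kraus_ampl d K \<kappa> w \<tau>) * cnj (K' \<kappa>' s w)) = cnj (L \<kappa>' \<kappa> s \<tau>)" for \<kappa>' \<kappa> s \<tau>
    unfolding L[symmetric] by (simp add: mult.commute)
  have "kraus_map A (B*d) I' K' ?T $$ (r,r') =
      (\<Sum>\<kappa>'\<in>I'. \<Sum>w<B*d. \<Sum>w'<B*d. K' \<kappa>' r w * ?T $$ (w,w') * cnj (K' \<kappa>' r' w'))"
    using r by (simp add: kraus_map_def)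
  also have "\<dots> = (\<Sum>\<kappa>'\<in>I'. \<Sum>w<B*d. \<Sum>w'<B*d. K' \<kappa>' r w *
      (\<Sum>\<kappa>\<in>I. \<Sum>\<sigma><A*d*d. \<Sum>\<tau><A*d*d. kraus_ampl d K \<kappa> w \<sigma> * ?X $$ (\<sigma>,\<tau>) * cnj (kraus_ampl d K \<kappa> w' \<tau>)) *
      cnj (K' \<kappa>' r' w'))"
    by (intro sum.cong refl) (simp add: tensor_id_kraus_map_index)
  also have "\<dots> = (\<Sum>\<kappa>'\<in>I'. \<Sum>\<kappa>\<in>I. \<Sum>\<sigma><A*d*d. \<Sum>\<tau><A*d*d.
      (\<Sum>w<B*d. K' \<kappa>' r w * kraus_ampl d K \<kappa> w \<sigma>) * ?X $$ (\<sigma>,\<tau>) *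
      (\<Sum>w'<B*d. cnj (kraus_ampl d K \<kappa> w' \<tau>) * cnj (K' \<kappa>' r' w')))"
    by (rule sum.cong[OF refl], rule sum_kraus_sandwich)
  also have "\<dots> = (\<Sum>\<kappa>'\<in>I'. \<Sum>\<kappa>\<in>I. \<Sum>\<sigma><A*d*d. \<Sum>\<tau><A*d*d. L \<kappa>' \<kappa> r \<sigma> * ?X $$ (\<sigma>,\<tau>) * cnj (L \<kappa>' \<kappa> r' \<tau>))"
    by (simp only: L cnj_L)
  also have "\<dots> = (\<Sum>\<kappa>'\<in>I'. \<Sum>\<kappa>\<in>I. (1 / of_nat d) * (\<Sum>r1<A. \<Sum>r1'<A.
       \<rho> $$ (r1,r1') * kraus_pair_coeff d B K' K \<kappa>' \<kappa> r r1 * cnj (kraus_pair_coeff d B K' K \<kappa>' \<kappa> r' r1')))"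
  proof (intro sum.cong refl)
    fix \<kappa>' \<kappa>
    have "kraus_pair_coeff d B K' K \<kappa>' \<kappa> s r1 = (\<Sum>h<d. L \<kappa>' \<kappa> s ((r1*d+h)*d+h))" for s r1
      unfolding kraus_pair_coeff_def L_def by (intro sum.cong refl) simp
    then show "(\<Sum>\<sigma><A*d*d. \<Sum>\<tau><A*d*d. L \<kappa>' \<kappa> r \<sigma> * ?X $$ (\<sigma>,\<tau>) * cnj (L \<kappa>' \<kappa> r' \<tau>)) =
        (1 / of_nat d) * (\<Sum>r1<A. \<Sum>r1'<A.
       \<rho> $$ (r1,r1') * kraus_pair_coeff d B K' K \<kappa>' \<kappa> r r1 * cnj (kraus_pair_coeff d B K' K \<kappa>' \<kappa> r' r1'))"
      unfolding sum_kron_maxent[OF d \<rho>, of "L \<kappa>' \<kappa> r" "\<lambda>\<tau>. cnj (L \<kappa>' \<kappa> r' \<tau>)"] cnj_sum by simp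
  qed
  finally show ?thesis .
qed

section \<open>The teleportation channel\<close>

(* For weyl_channel ns ms f d P Q l1 l2, an index s of C^(sum ns) \<otimes> C^d splits into the row s div d
   and h = s mod d, with coordinates (l1 h, l2 h) in C^d = C^P \<otimes> C^Q.  For a block of size n of A
   read C^P = C^n \<otimes> C^(P div n), and for a block of size m of B read C^Q = C^m \<otimes> C^(Q div m).
   The Kraus operator labelled (x, c1, c2) applies the Bell functional of the Weyl label x to the
   block's C^n and the C^n of C^P, <c1| to C^(P div n), <c2| to C^(Q div m), and the Weyl matrix
   of f x from the C^m of C^Q into the corresponding block of B. *)
definition kraus_labels :: "nat list \<Rightarrow> nat list \<Rightarrow> (nat\<times>nat\<times>nat \<Rightarrow> nat\<times>nat\<times>nat) \<Rightarrow> nat \<Rightarrow> nat \<Rightarrow> ((nat\<times>nat\<times>nat) \<times> nat \<times> nat) set" where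
  "kraus_labels ns ms f P Q = (SIGMA x:weyl_labels ns. {..<P div (ns ! fst x)} \<times> {..<Q div (ms ! fst (f x))})"

definition bell_coeff :: "nat list \<Rightarrow> nat \<Rightarrow> nat\<times>nat\<times>nat \<Rightarrow> nat \<Rightarrow> nat \<Rightarrow> nat \<Rightarrow> complex" where
  "bell_coeff ns P x c a r0 = (if in_block ns (fst x) r0 \<and> a mod (P div (ns ! fst x)) = c
     then complex_of_real (1 / sqrt (real (ns ! fst x))) *
       cnj (weyl (ns ! fst x) (fst (snd x)) (snd (snd x)) (r0 - blk_off ns (fst x)) (a div (P div (ns ! fst x))))
     else 0)"

definition weyl_coeff :: "nat list \<Rightarrow> nat \<Rightarrow> nat\<times>nat\<times>nat \<Rightarrow> nat \<Rightarrow> nat \<Rightarrow> nat \<Rightarrow> complex" where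
  "weyl_coeff ms Q y c b u = (if in_block ms (fst y) u \<and> b mod (Q div (ms ! fst y)) = c
     then weyl (ms ! fst y) (fst (snd y)) (snd (snd y)) (u - blk_off ms (fst y)) (b div (Q div (ms ! fst y)))
     else 0)"

definition kraus_op :: "nat list \<Rightarrow> nat list \<Rightarrow> (nat\<times>nat\<times>nat \<Rightarrow> nat\<times>nat\<times>nat) \<Rightarrow> nat \<Rightarrow> nat \<Rightarrow> nat \<Rightarrow>
    (nat \<Rightarrow> nat) \<Rightarrow> (nat \<Rightarrow> nat) \<Rightarrow> (nat\<times>nat\<times>nat) \<times> nat \<times> nat \<Rightarrow> nat \<Rightarrow> nat \<Rightarrow> complex" where
  "kraus_op ns ms f d P Q l1 l2 \<kappa> u s =
     bell_coeff ns P (fst \<kappa>) (fst (snd \<kappa>)) (l1 (s mod d)) (s div d) * weyl_coeff ms Q (f (fst \<kappa>)) (snd (snd \<kappa>)) (l2 (s mod d)) u"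

definition weyl_channel :: "nat list \<Rightarrow> nat list \<Rightarrow> (nat\<times>nat\<times>nat \<Rightarrow> nat\<times>nat\<times>nat) \<Rightarrow> nat \<Rightarrow> nat \<Rightarrow> nat \<Rightarrow>
    (nat \<Rightarrow> nat) \<Rightarrow> (nat \<Rightarrow> nat) \<Rightarrow> complex mat \<Rightarrow> complex mat" where
  "weyl_channel ns ms f d P Q l1 l2 = kraus_map (sum_list ms) (sum_list ns * d) (kraus_labels ns ms f P Q) (kraus_op ns ms f d P Q l1 l2)"

lemma finite_kraus_labels: "finite (kraus_labels ns ms f P Q)"
  unfolding kraus_labels_def using finite_weyl_labels by auto

lemma kraus_labels_iff: "(x,c1,c2) \<in> kraus_labels ns ms f P Q \<longleftrightarrow> x \<in> weyl_labels ns \<and> c1 < P div (ns ! fst x) \<and> c2 < Q div (ms ! fst (f x))"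
  unfolding kraus_labels_def by auto

lemma sum_kraus_labels:
  "(\<Sum>\<kappa>\<in>kraus_labels ns ms f P Q. F \<kappa>) =
   (\<Sum>x\<in>weyl_labels ns. \<Sum>c1<P div (ns ! fst x). \<Sum>c2<Q div (ms ! fst (f x)). F (x,c1,c2))"
proof -
  have "(\<Sum>x\<in>weyl_labels ns. \<Sum>c1<P div (ns ! fst x). \<Sum>c2<Q div (ms ! fst (f x)). F (x,c1,c2)) =
     (\<Sum>x\<in>weyl_labels ns. \<Sum>c\<in>{..<P div (ns ! fst x)} \<times> {..<Q div (ms ! fst (f x))}. F (x, c))"
    by (simp add: sum.cartesian_product split_beta)
  also have "\<dots> = (\<Sum>(x,c)\<in>kraus_labels ns ms f P Q. F (x,c))"
    unfolding kraus_labels_def by (rule sum.Sigma) (auto simp: finite_weyl_labels)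
  finally show ?thesis by (simp add: split_beta)
qed

lemma weyl_coeff_isometry:
  assumes y: "y \<in> weyl_labels ms" and pos: "\<forall>m\<in>set ms. 0 < m" and dv: "\<forall>j<length ms. ms!j dvd Q"
    and b: "b < Q" "b' < Q"
  shows "(\<Sum>c<Q div (ms ! fst y). \<Sum>u<sum_list ms. cnj (weyl_coeff ms Q y c b' u) * weyl_coeff ms Q y c b u) =
     (if b = b' then 1 else 0)"
proof -
  obtain j p q where yj: "y = (j,p,q)" by (cases y) auto
  let ?m = "ms ! j" and ?e = "Q div (ms ! j)"
  have jl: "j < length ms" and pq: "p < ?m" "q < ?m" using y yj by (auto simp: weyl_labels_iff)
  have m0: "0 < ?m" using pos jl by auto
  have dvj: "?m dvd Q" using dv jl by auto
  have e0: "0 < ?e" using b dvj m0 by (metis dvd_div_eq_0_iff less_nat_zero_code neq0_conv)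
  have Qe: "Q = ?m * ?e" using dvj by simp
  have bd: "b div ?e < ?m" "b' div ?e < ?m" using b Qe e0 by (auto simp: div_less_iff_less_mult mult.commute)
  have "(\<Sum>c<?e. \<Sum>u<sum_list ms. cnj (weyl_coeff ms Q y c b' u) * weyl_coeff ms Q y c b u) =
     (\<Sum>c<?e. if c = b mod ?e \<and> c = b' mod ?e then
        (\<Sum>u<sum_list ms. if in_block ms j u then (\<lambda>b0. cnj (weyl ?m p q b0 (b' div ?e)) * weyl ?m p q b0 (b div ?e)) (u - blk_off ms j) else 0) else 0)"
  proof -
    have pt: "cnj (weyl_coeff ms Q y c b' u) * weyl_coeff ms Q y c b u = (if c = b mod ?e \<and> c = b' mod ?e then
        (if in_block ms j u then (\<lambda>b0. cnj (weyl ?m p q b0 (b' div ?e)) * weyl ?m p q b0 (b div ?e)) (u - blk_off ms j) else 0) else 0)" for c u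
      by (auto simp: weyl_coeff_def yj)
    show ?thesis unfolding pt sum_if_const_cond by (rule refl)
  qed
  also have "\<dots> = (\<Sum>c<?e. if c = b mod ?e \<and> c = b' mod ?e then
        (\<Sum>b0<?m. cnj (weyl ?m p q b0 (b' div ?e)) * weyl ?m p q b0 (b div ?e)) else 0)"
    using sum_block_shift[OF jl, of "\<lambda>b0. cnj (weyl ?m p q b0 (b' div ?e)) * weyl ?m p q b0 (b div ?e)"] by (simp only:)
  also have "\<dots> = (\<Sum>c<?e. if c = b mod ?e \<and> c = b' mod ?e then (if b' div ?e = b div ?e then 1 else 0) else 0)"
    using weyl_columns_orthonormal[OF m0 bd(2) bd(1) pq(1), of q] by (simp only:)
  also have "\<dots> = (if b' mod ?e = b mod ?e then (if b' div ?e = b div ?e then 1 else 0) else 0)"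
    using e0 by (simp add: sum_delta_both_eq)
  also have "\<dots> = (if b = b' then 1 else 0)"
    by (metis div_mult_mod_eq)
  finally show ?thesis using yj by simp
qed

lemma inverse_sqrt_square_mult: "0 < n \<Longrightarrow> complex_of_real (1 / sqrt (real n)) * complex_of_real (1 / sqrt (real n)) * of_nat n = 1"
proof -
  assume n: "0 < n"
  have "(1 / sqrt (real n)) * (1 / sqrt (real n)) * real n = 1"
    using n by (simp add: field_simps)
  have "complex_of_real (1 / sqrt (real n)) * complex_of_real (1 / sqrt (real n)) * of_nat n =
     complex_of_real ((1 / sqrt (real n)) * (1 / sqrt (real n)) * real n)"
    by (simp only: of_real_mult of_real_of_nat_eq)
  also have "\<dots> = 1" using \<open>(1 / sqrt (real n)) * (1 / sqrt (real n)) * real n = 1\<close> by simp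
  finally show ?thesis .
qed

lemma bell_coeff_complete_block:
  assumes n0: "0 < ns ! i" and dvi: "ns ! i dvd P" and a: "a < P" "a' < P"
    and r: "in_block ns i r0" "in_block ns i r0'"
  shows "(\<Sum>p<ns!i. \<Sum>q<ns!i. \<Sum>c1<P div (ns ! i).
      cnj (bell_coeff ns P (i,p,q) c1 a' r0') * bell_coeff ns P (i,p,q) c1 a r0) = (if a = a' \<and> r0 = r0' then 1 else 0)"
proof -
  let ?n = "ns ! i" and ?e = "P div (ns ! i)" and ?o = "blk_off ns i"
  let ?c = "complex_of_real (1 / sqrt (real ?n))"
  have e0: "0 < ?e" using a dvi n0 by (metis dvd_div_eq_0_iff less_nat_zero_code neq0_conv)
  have Pe: "P = ?n * ?e" using dvi by simp
  have ad: "a div ?e < ?n" "a' div ?e < ?n" using a Pe e0 by (auto simp: div_less_iff_less_mult mult.commute)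
  have rl: "r0 - ?o < ?n" "r0' - ?o < ?n" using r unfolding in_block_def by auto
  have pt: "cnj (bell_coeff ns P (i,p,q) c1 a' r0') * bell_coeff ns P (i,p,q) c1 a r0 =
     (if c1 = a mod ?e \<and> c1 = a' mod ?e then ?c * ?c * (weyl ?n p q (r0' - ?o) (a' div ?e) * cnj (weyl ?n p q (r0 - ?o) (a div ?e))) else 0)" for p q c1
    using r by (auto simp: bell_coeff_def)
  have "(\<Sum>p<?n. \<Sum>q<?n. \<Sum>c1<?e. cnj (bell_coeff ns P (i,p,q) c1 a' r0') * bell_coeff ns P (i,p,q) c1 a r0) =
      (\<Sum>p<?n. \<Sum>q<?n. \<Sum>c1<?e. if c1 = a mod ?e \<and> c1 = a' mod ?e then ?c * ?c * (weyl ?n p q (r0' - ?o) (a' div ?e) * cnj (weyl ?n p q (r0 - ?o) (a div ?e))) else 0)"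
    by (simp only: pt)
  also have "\<dots> = (\<Sum>c1<?e. \<Sum>p<?n. \<Sum>q<?n. if c1 = a mod ?e \<and> c1 = a' mod ?e then ?c * ?c * (weyl ?n p q (r0' - ?o) (a' div ?e) * cnj (weyl ?n p q (r0 - ?o) (a div ?e))) else 0)"
  proof -
    have "(\<Sum>p<?n. \<Sum>q<?n. \<Sum>c1<?e. if c1 = a mod ?e \<and> c1 = a' mod ?e then ?c * ?c * (weyl ?n p q (r0' - ?o) (a' div ?e) * cnj (weyl ?n p q (r0 - ?o) (a div ?e))) else 0)
       = (\<Sum>p<?n. \<Sum>c1<?e. \<Sum>q<?n. if c1 = a mod ?e \<and> c1 = a' mod ?e then ?c * ?c * (weyl ?n p q (r0' - ?o) (a' div ?e) * cnj (weyl ?n p q (r0 - ?o) (a div ?e))) else 0)"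
      by (rule sum.cong[OF refl], rule sum.swap)
    also have "\<dots> = (\<Sum>c1<?e. \<Sum>p<?n. \<Sum>q<?n. if c1 = a mod ?e \<and> c1 = a' mod ?e then ?c * ?c * (weyl ?n p q (r0' - ?o) (a' div ?e) * cnj (weyl ?n p q (r0 - ?o) (a div ?e))) else 0)"
      by (rule sum.swap)
    finally show ?thesis .
  qed
  also have "\<dots> = (\<Sum>c1<?e. if c1 = a mod ?e \<and> c1 = a' mod ?e then ?c * ?c * (\<Sum>p<?n. \<Sum>q<?n. weyl ?n p q (r0' - ?o) (a' div ?e) * cnj (weyl ?n p q (r0 - ?o) (a div ?e))) else 0)"
    unfolding sum_if_const_cond sum_distrib_left by (rule refl)
  also have "(\<Sum>p<?n. \<Sum>q<?n. weyl ?n p q (r0' - ?o) (a' div ?e) * cnj (weyl ?n p q (r0 - ?o) (a div ?e))) =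
      (if r0' - ?o = r0 - ?o \<and> a' div ?e = a div ?e then of_nat ?n else 0)"
    by (rule weyl_complete[OF n0 rl(2) ad(2) rl(1) ad(1)])
  also have "(\<Sum>c1<?e. if c1 = a mod ?e \<and> c1 = a' mod ?e then ?c * ?c * (if r0' - ?o = r0 - ?o \<and> a' div ?e = a div ?e then of_nat ?n else 0) else 0)
      = (if a' mod ?e = a mod ?e then ?c * ?c * (if r0' - ?o = r0 - ?o \<and> a' div ?e = a div ?e then of_nat ?n else 0) else 0)"
    using e0 by (simp add: sum_delta_both_eq)
  also have "\<dots> = (if a = a' \<and> r0 = r0' then 1 else 0)"
  proof -
    have "(a' mod ?e = a mod ?e \<and> a' div ?e = a div ?e) \<longleftrightarrow> a = a'" by (metis div_mult_mod_eq)
    moreover have "(r0' - ?o = r0 - ?o) \<longleftrightarrow> r0 = r0'" using r unfolding in_block_def by auto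
    ultimately show ?thesis using inverse_sqrt_square_mult[OF n0] by auto
  qed
  finally show ?thesis .
qed

lemma bell_coeff_complete:
  assumes pos: "\<forall>n\<in>set ns. 0 < n" and dv: "\<forall>i<length ns. ns!i dvd P"
    and a: "a < P" "a' < P" and r: "r0 < sum_list ns" "r0' < sum_list ns"
  shows "(\<Sum>x\<in>weyl_labels ns. \<Sum>c1<P div (ns ! fst x). cnj (bell_coeff ns P x c1 a' r0') * bell_coeff ns P x c1 a r0) =
     (if a = a' \<and> r0 = r0' then 1 else 0)"
proof -
  let ?T = "\<lambda>i. (\<Sum>p<ns!i. \<Sum>q<ns!i. \<Sum>c1<P div (ns ! i). cnj (bell_coeff ns P (i,p,q) c1 a' r0') * bell_coeff ns P (i,p,q) c1 a r0)"
  define i0 where "i0 = block_of ns r0"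
  have i0: "in_block ns i0 r0" unfolding i0_def by (rule in_block_block_of[OF r(1)])
  have i0l: "i0 < length ns" using i0 by (simp add: in_block_def)
  have Tz: "?T i = 0" if "i \<noteq> i0" for i
  proof -
    have "\<not> in_block ns i r0" using that i0 in_block_unique by blast
    then show ?thesis by (simp add: bell_coeff_def)
  qed
  have "(\<Sum>x\<in>weyl_labels ns. \<Sum>c1<P div (ns ! fst x). cnj (bell_coeff ns P x c1 a' r0') * bell_coeff ns P x c1 a r0) =
      (\<Sum>i<length ns. ?T i)"
    by (simp add: sum_weyl_labels)
  also have "\<dots> = (\<Sum>i<length ns. if i = i0 then ?T i else 0)"
    by (intro sum.cong refl) (simp add: Tz)
  also have "\<dots> = ?T i0" using i0l by (simp add: sum.delta)
  also have "?T i0 = (if a = a' \<and> r0 = r0' then 1 else 0)"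
  proof (cases "in_block ns i0 r0'")
    case False
    then have "r0 \<noteq> r0'" using i0 by auto
    moreover have "?T i0 = 0" using False by (simp add: bell_coeff_def)
    ultimately show ?thesis by simp
  next
    case True
    show ?thesis by (rule bell_coeff_complete_block[OF _ _ a i0 True]) (use pos dv i0l in auto)
  qed
  finally show ?thesis .
qed

lemma kraus_op_trace_preserving:
  assumes posn: "\<forall>n\<in>set ns. 0 < n" and posm: "\<forall>m\<in>set ms. 0 < m"
    and dvn: "\<forall>i<length ns. ns!i dvd P" and dvm: "\<forall>j<length ms. ms!j dvd Q"
    and fmap: "\<forall>x\<in>weyl_labels ns. f x \<in> weyl_labels ms"
    and lay: "bij_betw (\<lambda>h. (l1 h, l2 h)) {..<d} ({..<P} \<times> {..<Q})"
    and s: "s < sum_list ns * d" and t: "t < sum_list ns * d"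
  shows "(\<Sum>\<kappa>\<in>kraus_labels ns ms f P Q. \<Sum>u<sum_list ms. cnj (kraus_op ns ms f d P Q l1 l2 \<kappa> u t) * kraus_op ns ms f d P Q l1 l2 \<kappa> u s)
     = (if s = t then 1 else 0)"
proof -
  have d: "0 < d" using s by (metis mult_0_right not_gr_zero not_less_zero)
  define r0 h r0' h' where "r0 = s div d" and "h = s mod d" and "r0' = t div d" and "h' = t mod d"
  have hd: "h < d" "h' < d" using d by (auto simp: h_def h'_def)
  have r: "r0 < sum_list ns" "r0' < sum_list ns" using s t d by (auto simp: r0_def r0'_def div_less_iff_less_mult)
  have lb: "l1 h < P" "l2 h < Q" "l1 h' < P" "l2 h' < Q"
    using bij_betw_apply[OF lay, of h] bij_betw_apply[OF lay, of h'] hd by auto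
  let ?A = "\<lambda>x c1. cnj (bell_coeff ns P x c1 (l1 h') r0') * bell_coeff ns P x c1 (l1 h) r0"
  let ?B = "\<lambda>x c2 u. cnj (weyl_coeff ms Q (f x) c2 (l2 h') u) * weyl_coeff ms Q (f x) c2 (l2 h) u"
  have pt: "cnj (kraus_op ns ms f d P Q l1 l2 (x,c1,c2) u t) * kraus_op ns ms f d P Q l1 l2 (x,c1,c2) u s = ?A x c1 * ?B x c2 u" for x c1 c2 u
    by (simp add: kraus_op_def r0_def h_def r0'_def h'_def mult_ac)
  have "(\<Sum>\<kappa>\<in>kraus_labels ns ms f P Q. \<Sum>u<sum_list ms. cnj (kraus_op ns ms f d P Q l1 l2 \<kappa> u t) * kraus_op ns ms f d P Q l1 l2 \<kappa> u s)
     = (\<Sum>x\<in>weyl_labels ns. \<Sum>c1<P div (ns ! fst x). \<Sum>c2<Q div (ms ! fst (f x)). \<Sum>u<sum_list ms. ?A x c1 * ?B x c2 u)"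
    unfolding sum_kraus_labels pt by (rule refl)
  also have "\<dots> = (\<Sum>x\<in>weyl_labels ns. \<Sum>c1<P div (ns ! fst x). ?A x c1 * (\<Sum>c2<Q div (ms ! fst (f x)). \<Sum>u<sum_list ms. ?B x c2 u))"
    by (simp add: sum_distrib_left)
  also have "\<dots> = (\<Sum>x\<in>weyl_labels ns. \<Sum>c1<P div (ns ! fst x). ?A x c1 * (if l2 h = l2 h' then 1 else 0))"
  proof (rule sum.cong[OF refl], rule sum.cong[OF refl])
    fix x c1 assume x: "x \<in> weyl_labels ns"
    have "(\<Sum>c2<Q div (ms ! fst (f x)). \<Sum>u<sum_list ms. ?B x c2 u) = (if l2 h = l2 h' then 1 else 0)"
      by (rule weyl_coeff_isometry[OF fmap[rule_format, OF x] posm dvm lb(2) lb(4)])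
    then show "?A x c1 * (\<Sum>c2<Q div (ms ! fst (f x)). \<Sum>u<sum_list ms. ?B x c2 u) = ?A x c1 * (if l2 h = l2 h' then 1 else 0)"
      by simp
  qed
  also have "\<dots> = (if l2 h = l2 h' then 1 else 0) * (\<Sum>x\<in>weyl_labels ns. \<Sum>c1<P div (ns ! fst x). ?A x c1)"
    by (simp add: sum_distrib_left mult.commute)
  also have "(\<Sum>x\<in>weyl_labels ns. \<Sum>c1<P div (ns ! fst x). ?A x c1) = (if l1 h = l1 h' \<and> r0 = r0' then 1 else 0)"
    by (rule bell_coeff_complete[OF posn dvn lb(1) lb(3) r])
  also have "(if l2 h = l2 h' then 1 else 0) * (if l1 h = l1 h' \<and> r0 = r0' then 1 else 0) = (if s = t then (1::complex) else 0)"
  proof -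
    have "(l2 h = l2 h' \<and> l1 h = l1 h' \<and> r0 = r0') \<longleftrightarrow> s = t"
    proof
      assume eq: "l2 h = l2 h' \<and> l1 h = l1 h' \<and> r0 = r0'"
      have "h = h'" using inj_onD[OF bij_betw_imp_inj_on[OF lay], of h h'] eq hd by simp
      moreover have "r0 = r0'" using eq by simp
      ultimately show "s = t" unfolding r0_def h_def r0'_def h'_def by (metis div_mult_mod_eq)
    qed (simp add: r0_def h_def r0'_def h'_def)
    then show ?thesis by auto
  qed
  finally show ?thesis .
qed

lemma channel_weyl_channel:
  assumes posn: "\<forall>n\<in>set ns. 0 < n" and posm: "\<forall>m\<in>set ms. 0 < m"
    and dvn: "\<forall>i<length ns. ns!i dvd P" and dvm: "\<forall>j<length ms. ms!j dvd Q"
    and fmap: "\<forall>x\<in>weyl_labels ns. f x \<in> weyl_labels ms"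
    and lay: "bij_betw (\<lambda>h. (l1 h, l2 h)) {..<d} ({..<P} \<times> {..<Q})" and d: "0 < d"
  shows "channel (ampl ns d) ms (weyl_channel ns ms f d P Q l1 l2)"
  unfolding channel_def
proof (intro conjI ballI allI impI)
  let ?K = "kraus_op ns ms f d P Q l1 l2" and ?I = "kraus_labels ns ms f P Q"
  fix X assume X: "X \<in> fdalg (ampl ns d)"
  show "weyl_channel ns ms f d P Q l1 l2 X \<in> fdalg ms"
    unfolding weyl_channel_def
  proof (rule kraus_map_fdalg)
    fix \<kappa> u v s t assume "\<kappa> \<in> ?I" "?K \<kappa> u s \<noteq> 0" "?K \<kappa> v t \<noteq> 0"
    then have "in_block ms (fst (f (fst \<kappa>))) u" "in_block ms (fst (f (fst \<kappa>))) v"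
      unfolding kraus_op_def weyl_coeff_def by (auto split: if_splits)
    then show "same_block ms u v" unfolding same_block_iff_in_block by blast
  qed
  have Xc: "X \<in> carrier_mat (sum_list ns * d) (sum_list ns * d)" using X fdalg_carrier sum_list_ampl by metis
  show "mtrace (weyl_channel ns ms f d P Q l1 l2 X) = mtrace X"
  proof -
    have "mtrace (weyl_channel ns ms f d P Q l1 l2 X) = (\<Sum>s<sum_list ns * d. X $$ (s,s))"
      unfolding weyl_channel_def
      by (rule mtrace_kraus_map) (rule kraus_op_trace_preserving[OF posn posm dvn dvm fmap lay])
    also have "\<dots> = mtrace X" using Xc by (simp add: mtrace_def)
    finally show ?thesis .
  qed
  fix Y a b assume Y: "Y \<in> fdalg (ampl ns d)"
  have Yc: "Y \<in> carrier_mat (sum_list ns * d) (sum_list ns * d)" using Y fdalg_carrier sum_list_ampl by metis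
  show "weyl_channel ns ms f d P Q l1 l2 (a \<cdot>\<^sub>m X + b \<cdot>\<^sub>m Y) = a \<cdot>\<^sub>m weyl_channel ns ms f d P Q l1 l2 X + b \<cdot>\<^sub>m weyl_channel ns ms f d P Q l1 l2 Y"
    unfolding weyl_channel_def by (rule kraus_map_linear[OF Xc Yc])
next
  fix k :: nat and Z assume k: "0 < k" and Z: "Z \<in> fdalg (ampl (ampl ns d) k)" and ps: "psd (sum_list (ampl ns d) * k) Z"
  show "psd (sum_list ms * k) (tensor_id (weyl_channel ns ms f d P Q l1 l2) (sum_list (ampl ns d)) (sum_list ms) k Z)"
    unfolding weyl_channel_def sum_list_ampl
    by (rule kraus_map_completely_positive[OF k]) (use ps in \<open>simp add: sum_list_ampl\<close>)
qed

section \<open>Undoing the teleportation channel\<close>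

lemma sum_bell_coeff_weyl_coeff:
  assumes y: "y \<in> weyl_labels ms" and y': "y' \<in> weyl_labels ms" and pos: "\<forall>m\<in>set ms. 0 < m"
    and dv: "\<forall>j<length ms. ms!j dvd Q"
    and e1: "e1 < Q div (ms ! fst y)"
  shows "(\<Sum>b<Q. \<Sum>u<sum_list ms. bell_coeff ms Q y e1 b u * weyl_coeff ms Q y' c2 b u) =
    (if y = y' \<and> e1 = c2 then complex_of_real (1 / sqrt (real (ms ! fst y))) * of_nat (ms ! fst y) else 0)"
proof (cases "fst y = fst y'")
  case False
  have z: "bell_coeff ms Q y e1 b u * weyl_coeff ms Q y' c2 b u = 0" for b u
    using False in_block_unique[of ms "fst y" u "fst y'"] unfolding bell_coeff_def weyl_coeff_def by auto
  have "(\<Sum>b<Q. \<Sum>u<sum_list ms. bell_coeff ms Q y e1 b u * weyl_coeff ms Q y' c2 b u) = 0"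
    by (simp add: z)
  then show ?thesis using False by auto
next
  case True
  obtain j p q where yj: "y = (j,p,q)" by (cases y) auto
  obtain p' q' where yj': "y' = (j,p',q')" using True yj by (cases y') auto
  let ?m = "ms ! j" and ?e = "Q div (ms ! j)" and ?o = "blk_off ms j"
  have jl: "j < length ms" and pq: "p < ?m" "q < ?m" "p' < ?m" "q' < ?m"
    using y y' yj yj' by (auto simp: weyl_labels_iff)
  have m0: "0 < ?m" using pos jl by auto
  have dvj: "?m dvd Q" using dv jl by auto
  have e0: "0 < ?e" using e1 yj by simp
  let ?c = "complex_of_real (1 / sqrt (real ?m))"
  define S where "S \<beta> = (\<Sum>b0<?m. cnj (weyl ?m p q b0 \<beta>) * weyl ?m p' q' b0 \<beta>)" for \<beta>
  have step1: "(\<Sum>u<sum_list ms. bell_coeff ms Q y e1 b u * weyl_coeff ms Q y' c2 b u) =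
      (if b mod ?e = e1 \<and> b mod ?e = c2 then ?c * S (b div ?e) else 0)" for b
  proof -
    have "(\<Sum>u<sum_list ms. bell_coeff ms Q y e1 b u * weyl_coeff ms Q y' c2 b u) =
       (\<Sum>u<sum_list ms. if in_block ms j u then (\<lambda>b0. if b mod ?e = e1 \<and> b mod ?e = c2 then
            ?c * (cnj (weyl ?m p q b0 (b div ?e)) * weyl ?m p' q' b0 (b div ?e)) else 0) (u - ?o) else 0)"
      by (intro sum.cong refl) (auto simp: bell_coeff_def weyl_coeff_def yj yj')
    also have "\<dots> = (\<Sum>b0<?m. if b mod ?e = e1 \<and> b mod ?e = c2 then
            ?c * (cnj (weyl ?m p q b0 (b div ?e)) * weyl ?m p' q' b0 (b div ?e)) else 0)"
      by (rule sum_block_shift[OF jl])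
    also have "\<dots> = (if b mod ?e = e1 \<and> b mod ?e = c2 then ?c * S (b div ?e) else 0)"
      unfolding sum_if_const_cond S_def sum_distrib_left by (rule refl)
    finally show ?thesis .
  qed
  have "(\<Sum>b<Q. \<Sum>u<sum_list ms. bell_coeff ms Q y e1 b u * weyl_coeff ms Q y' c2 b u) =
      (\<Sum>b<Q. if b mod ?e = e1 \<and> b mod ?e = c2 then ?c * S (b div ?e) else 0)"
    by (simp add: step1)
  also have "\<dots> = (\<Sum>\<beta><?m. \<Sum>t<?e. if (\<beta> * ?e + t) mod ?e = e1 \<and> (\<beta> * ?e + t) mod ?e = c2 then ?c * S ((\<beta> * ?e + t) div ?e) else 0)"
    by (rule sum_lessThan_dvd_split[OF dvj])
  also have "\<dots> = (\<Sum>\<beta><?m. \<Sum>t<?e. if t = e1 \<and> t = c2 then ?c * S \<beta> else 0)"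
    by (intro sum.cong refl) simp
  also have "\<dots> = (\<Sum>\<beta><?m. if c2 = e1 then ?c * S \<beta> else 0)"
    using e1 yj by (simp add: sum_delta_both_eq)
  also have "\<dots> = (if c2 = e1 then ?c * (\<Sum>\<beta><?m. S \<beta>) else 0)"
    by (simp add: sum_distrib_left)
  also have "(\<Sum>\<beta><?m. S \<beta>) = (\<Sum>b0<?m. \<Sum>\<beta><?m. cnj (weyl ?m p q b0 \<beta>) * weyl ?m p' q' b0 \<beta>)"
    unfolding S_def by (rule sum.swap)
  also have "\<dots> = (if p = p' \<and> q = q' then of_nat ?m else 0)"
    by (rule weyl_orthogonal[OF m0 pq])
  finally show ?thesis using yj yj' by auto
qed

lemma sum_weyl_coeff_bell_coeff:
  assumes x: "x \<in> weyl_labels ns" and pos: "\<forall>n\<in>set ns. 0 < n"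
    and dv: "\<forall>i<length ns. ns!i dvd P"
    and c1: "c1 < P div (ns ! fst x)"
  shows "(\<Sum>a<P. weyl_coeff ns P x e2 a r * bell_coeff ns P x c1 a r0) =
    (if e2 = c1 \<and> in_block ns (fst x) r \<and> r = r0 then complex_of_real (1 / sqrt (real (ns ! fst x))) else 0)"
proof -
  obtain i p q where xi: "x = (i,p,q)" by (cases x) auto
  let ?n = "ns ! i" and ?e = "P div (ns ! i)" and ?o = "blk_off ns i"
  have il: "i < length ns" and pq: "p < ?n" "q < ?n"
    using x xi by (auto simp: weyl_labels_iff)
  have n0: "0 < ?n" using pos il by auto
  have dvi: "?n dvd P" using dv il by auto
  let ?c = "complex_of_real (1 / sqrt (real ?n))"
  show ?thesis
  proof (cases "in_block ns i r \<and> in_block ns i r0")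
    case False
    then have z: "weyl_coeff ns P x e2 a r * bell_coeff ns P x c1 a r0 = 0" for a
      unfolding bell_coeff_def weyl_coeff_def xi by auto
    have nn: "\<not> (in_block ns (fst x) r \<and> r = r0)" using False xi by auto
    have "(\<Sum>a<P. weyl_coeff ns P x e2 a r * bell_coeff ns P x c1 a r0) = 0" by (simp add: z)
    then show ?thesis using nn by auto
  next
    case True
    have rl: "r - ?o < ?n" "r0 - ?o < ?n" using True unfolding in_block_def by auto
    have "(\<Sum>a<P. weyl_coeff ns P x e2 a r * bell_coeff ns P x c1 a r0) =
       (\<Sum>a<P. if a mod ?e = c1 \<and> a mod ?e = e2 then ?c * (weyl ?n p q (r - ?o) (a div ?e) * cnj (weyl ?n p q (r0 - ?o) (a div ?e))) else 0)"
      using True by (intro sum.cong refl) (auto simp: bell_coeff_def weyl_coeff_def xi)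
    also have "\<dots> = (\<Sum>\<alpha><?n. \<Sum>t<?e. if (\<alpha> * ?e + t) mod ?e = c1 \<and> (\<alpha> * ?e + t) mod ?e = e2 then
         ?c * (weyl ?n p q (r - ?o) ((\<alpha> * ?e + t) div ?e) * cnj (weyl ?n p q (r0 - ?o) ((\<alpha> * ?e + t) div ?e))) else 0)"
      by (rule sum_lessThan_dvd_split[OF dvi])
    also have "\<dots> = (\<Sum>\<alpha><?n. \<Sum>t<?e. if t = c1 \<and> t = e2 then
         ?c * (weyl ?n p q (r - ?o) \<alpha> * cnj (weyl ?n p q (r0 - ?o) \<alpha>)) else 0)"
      by (intro sum.cong refl) simp
    also have "\<dots> = (\<Sum>\<alpha><?n. if e2 = c1 then ?c * (weyl ?n p q (r - ?o) \<alpha> * cnj (weyl ?n p q (r0 - ?o) \<alpha>)) else 0)"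
      using c1 xi by (simp add: sum_delta_both_eq)
    also have "\<dots> = (if e2 = c1 then ?c * (\<Sum>\<alpha><?n. weyl ?n p q (r - ?o) \<alpha> * cnj (weyl ?n p q (r0 - ?o) \<alpha>)) else 0)"
      unfolding sum_if_const_cond sum_distrib_left by (rule refl)
    also have "(\<Sum>\<alpha><?n. weyl ?n p q (r - ?o) \<alpha> * cnj (weyl ?n p q (r0 - ?o) \<alpha>)) = (if r - ?o = r0 - ?o then 1 else 0)"
      by (rule weyl_rows_orthonormal[OF n0 rl])
    also have "(r - ?o = r0 - ?o) \<longleftrightarrow> r = r0" using True unfolding in_block_def by auto
    finally show ?thesis using True xi by auto
  qed
qed

definition composite_weight :: "nat list \<Rightarrow> nat list \<Rightarrow> (nat\<times>nat\<times>nat \<Rightarrow> nat\<times>nat\<times>nat) \<Rightarrow> nat\<times>nat\<times>nat \<Rightarrow> complex" where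
  "composite_weight ns ms f x = complex_of_real (1 / sqrt (real (ms ! fst (f x)))) * of_nat (ms ! fst (f x)) *
      complex_of_real (1 / sqrt (real (ns ! fst x)))"

lemma kraus_op_composite:
  assumes posn: "\<forall>n\<in>set ns. 0 < n" and posm: "\<forall>m\<in>set ms. 0 < m"
    and dvn: "\<forall>i<length ns. ns!i dvd P" and dvm: "\<forall>j<length ms. ms!j dvd Q"
    and fmap: "\<forall>x\<in>weyl_labels ns. f x \<in> weyl_labels ms" and ginv: "\<forall>x\<in>weyl_labels ns. g (f x) = x"
    and lay: "bij_betw (\<lambda>h. (l1 h, l2 h)) {..<d} ({..<P} \<times> {..<Q})"
    and \<kappa>: "\<kappa> \<in> kraus_labels ns ms f P Q" and \<kappa>': "\<kappa>' \<in> kraus_labels ms ns g Q P"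
  shows "kraus_pair_coeff d (sum_list ms) (kraus_op ms ns g d Q P l2 l1) (kraus_op ns ms f d P Q l1 l2) \<kappa>' \<kappa> r r0
    = (if \<kappa>' = (f (fst \<kappa>), snd (snd \<kappa>), fst (snd \<kappa>)) \<and> in_block ns (fst (fst \<kappa>)) r \<and> r = r0
       then composite_weight ns ms f (fst \<kappa>) else 0)"
proof -
  obtain x c1 c2 where k: "\<kappa> = (x,c1,c2)" by (cases \<kappa>) auto
  obtain y e1 e2 where k': "\<kappa>' = (y,e1,e2)" by (cases \<kappa>') auto
  have x: "x \<in> weyl_labels ns" and c1: "c1 < P div (ns ! fst x)" using \<kappa> k by (auto simp: kraus_labels_iff)
  have y: "y \<in> weyl_labels ms" and e1: "e1 < Q div (ms ! fst y)" using \<kappa>' k' by (auto simp: kraus_labels_iff)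
  let ?F = "\<lambda>a. weyl_coeff ns P (g y) e2 a r * bell_coeff ns P x c1 a r0"
  let ?G = "\<lambda>b u. bell_coeff ms Q y e1 b u * weyl_coeff ms Q (f x) c2 b u"
  have "kraus_pair_coeff d (sum_list ms) (kraus_op ms ns g d Q P l2 l1) (kraus_op ns ms f d P Q l1 l2) \<kappa>' \<kappa> r r0
      = (\<Sum>h<d. \<Sum>u<sum_list ms. ?F (l1 h) * ?G (l2 h) u)"
    unfolding k k' kraus_pair_coeff_def by (intro sum.cong refl) (simp add: kraus_op_def mult_ac)
  also have "\<dots> = (\<Sum>h<d. ?F (l1 h) * (\<Sum>u<sum_list ms. ?G (l2 h) u))" by (simp add: sum_distrib_left)
  also have "\<dots> = (\<Sum>a<P. \<Sum>b<Q. ?F a * (\<Sum>u<sum_list ms. ?G b u))"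
    by (rule sum_bij_pair[OF lay, where G="\<lambda>a b. ?F a * (\<Sum>u<sum_list ms. ?G b u)"])
  also have "\<dots> = (\<Sum>a<P. ?F a) * (\<Sum>b<Q. \<Sum>u<sum_list ms. ?G b u)"
    by (rule sum_product[symmetric])
  also have "(\<Sum>b<Q. \<Sum>u<sum_list ms. ?G b u) =
      (if y = f x \<and> e1 = c2 then complex_of_real (1 / sqrt (real (ms ! fst y))) * of_nat (ms ! fst y) else 0)"
    by (rule sum_bell_coeff_weyl_coeff[OF y fmap[rule_format, OF x] posm dvm e1])
  finally have eq: "kraus_pair_coeff d (sum_list ms) (kraus_op ms ns g d Q P l2 l1) (kraus_op ns ms f d P Q l1 l2) \<kappa>' \<kappa> r r0
      = (\<Sum>a<P. ?F a) * (if y = f x \<and> e1 = c2 then complex_of_real (1 / sqrt (real (ms ! fst y))) * of_nat (ms ! fst y) else 0)" .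
  show ?thesis
  proof (cases "y = f x")
    case True
    then have gy: "g y = x" using ginv x by simp
    have "(\<Sum>a<P. ?F a) = (if e2 = c1 \<and> in_block ns (fst x) r \<and> r = r0 then complex_of_real (1 / sqrt (real (ns ! fst x))) else 0)"
      unfolding gy by (rule sum_weyl_coeff_bell_coeff[OF x posn dvn c1])
    then show ?thesis using eq True k k' by (auto simp: composite_weight_def mult_ac)
  next
    case False
    then show ?thesis using eq k k' by simp
  qed
qed

lemma composite_weight_count:
  assumes x: "x \<in> weyl_labels ns" and fx: "f x \<in> weyl_labels ms"
    and posn: "\<forall>n\<in>set ns. 0 < n" and posm: "\<forall>m\<in>set ms. 0 < m"
    and dvn: "\<forall>i<length ns. ns!i dvd P" and dvm: "\<forall>j<length ms. ms!j dvd Q"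
  shows "of_nat (P div ns ! fst x) * of_nat (Q div ms ! fst (f x)) * (composite_weight ns ms f x * cnj (composite_weight ns ms f x)) =
     (of_nat (P*Q) :: complex) / of_nat (ns ! fst x * ns ! fst x)"
proof -
  let ?n = "ns ! fst x" and ?m = "ms ! fst (f x)"
  have n0: "0 < ?n" using x posn by (auto simp: weyl_labels_iff)
  have m0: "0 < ?m" using fx posm by (auto simp: weyl_labels_iff)
  have dn: "?n dvd P" using x dvn by (auto simp: weyl_labels_iff)
  have dm: "?m dvd Q" using fx dvm by (auto simp: weyl_labels_iff)
  define gr where "gr = (1 / sqrt (real ?m)) * real ?m * (1 / sqrt (real ?n))"
  have g: "composite_weight ns ms f x = complex_of_real gr" unfolding composite_weight_def gr_def by simp
  have gr2: "gr * gr = real ?m / real ?n"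
    unfolding gr_def using n0 m0 by (simp add: field_simps)
  have Pn: "real (P div ?n) * real ?n = real P" using dn by (metis dvd_div_mult_self of_nat_mult)
  have Qm: "real (Q div ?m) * real ?m = real Q" using dm by (metis dvd_div_mult_self of_nat_mult)
  have "real (P div ?n) * real (Q div ?m) * (gr * gr) = real (P*Q) / real (?n * ?n)"
    unfolding gr2 using n0 m0 Pn Qm by (simp add: field_simps)
  then have "complex_of_real (real (P div ?n) * real (Q div ?m) * (gr * gr)) = complex_of_real (real (P*Q) / real (?n * ?n))"
    by simp
  then show ?thesis unfolding g by simp
qed

lemma sum_delta_pair_cnj:
  fixes \<rho> :: "complex mat"
  assumes r: "r < A" "r' < A"
  shows "(\<Sum>r1<A. \<Sum>r1'<A. \<rho> $$ (r1,r1') * (if B \<and> C r \<and> r = r1 then \<gamma> else 0) * cnj (if B \<and> C r' \<and> r' = r1' then \<gamma> else 0)) =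
     (if B \<and> C r \<and> C r' then \<rho> $$ (r,r') * \<gamma> * cnj \<gamma> else 0)"
proof -
  have "(\<Sum>r1<A. \<Sum>r1'<A. \<rho> $$ (r1,r1') * (if B \<and> C r \<and> r = r1 then \<gamma> else 0) * cnj (if B \<and> C r' \<and> r' = r1' then \<gamma> else 0)) =
     (\<Sum>r1<A. if r1 = r then (\<Sum>r1'<A. if r1' = r' then (if B \<and> C r \<and> C r' then \<rho> $$ (r1,r1') * \<gamma> * cnj \<gamma> else 0) else 0) else 0)"
  proof -
    have pt: "\<rho> $$ (r1,r1') * (if B \<and> C r \<and> r = r1 then \<gamma> else 0) * cnj (if B \<and> C r' \<and> r' = r1' then \<gamma> else 0) =
      (if r1 = r then (if r1' = r' then (if B \<and> C r \<and> C r' then \<rho> $$ (r1,r1') * \<gamma> * cnj \<gamma> else 0) else 0) else 0)" for r1 r1'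
      by auto
    show ?thesis unfolding pt sum_if_const_cond by (rule refl)
  qed
  also have "\<dots> = (if B \<and> C r \<and> C r' then \<rho> $$ (r,r') * \<gamma> * cnj \<gamma> else 0)"
    using r by (simp add: sum.delta)
  finally show ?thesis .
qed

lemma sum_composite_weights:
  assumes posn: "\<forall>n\<in>set ns. 0 < n" and posm: "\<forall>m\<in>set ms. 0 < m"
    and dvn: "\<forall>i<length ns. ns!i dvd P" and dvm: "\<forall>j<length ms. ms!j dvd Q"
    and fmap: "\<forall>x\<in>weyl_labels ns. f x \<in> weyl_labels ms" and dPQ: "d = P*Q" and d: "0 < d"
    and rho: "\<rho> \<in> fdalg ns" and r: "r < sum_list ns" "r' < sum_list ns"
  shows "(\<Sum>\<kappa>\<in>kraus_labels ns ms f P Q. (1 / of_nat d) * (if in_block ns (fst (fst \<kappa>)) r \<and> in_block ns (fst (fst \<kappa>)) r'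
      then \<rho> $$ (r,r') * (composite_weight ns ms f (fst \<kappa>) * cnj (composite_weight ns ms f (fst \<kappa>))) else 0)) = \<rho> $$ (r,r')"
proof -
  let ?C = "\<lambda>i. in_block ns i r \<and> in_block ns i r'"
  have "(\<Sum>\<kappa>\<in>kraus_labels ns ms f P Q. (1 / of_nat d) * (if ?C (fst (fst \<kappa>))
      then \<rho> $$ (r,r') * (composite_weight ns ms f (fst \<kappa>) * cnj (composite_weight ns ms f (fst \<kappa>))) else 0)) =
     (\<Sum>x\<in>weyl_labels ns. \<Sum>c1<P div (ns ! fst x). \<Sum>c2<Q div (ms ! fst (f x)). (1 / of_nat d) * (if ?C (fst x)
      then \<rho> $$ (r,r') * (composite_weight ns ms f x * cnj (composite_weight ns ms f x)) else 0))"
    unfolding sum_kraus_labels fst_conv by (rule refl)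
  also have "\<dots> = (\<Sum>x\<in>weyl_labels ns. (1 / of_nat d) * (if ?C (fst x)
      then \<rho> $$ (r,r') * (of_nat (P div ns ! fst x) * of_nat (Q div ms ! fst (f x)) * (composite_weight ns ms f x * cnj (composite_weight ns ms f x))) else 0))"
  proof (rule sum.cong[OF refl])
    fix x assume "x \<in> weyl_labels ns"
    let ?t = "(1 / of_nat d) * (if ?C (fst x) then \<rho> $$ (r,r') * (composite_weight ns ms f x * cnj (composite_weight ns ms f x)) else (0::complex))"
    have "(\<Sum>c1<P div (ns ! fst x). \<Sum>c2<Q div (ms ! fst (f x)). ?t) = of_nat (P div (ns ! fst x)) * (of_nat (Q div (ms ! fst (f x))) * ?t)"
      by simp
    then show "(\<Sum>c1<P div (ns ! fst x). \<Sum>c2<Q div (ms ! fst (f x)). ?t) = (1 / of_nat d) * (if ?C (fst x)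
      then \<rho> $$ (r,r') * (of_nat (P div ns ! fst x) * of_nat (Q div ms ! fst (f x)) * (composite_weight ns ms f x * cnj (composite_weight ns ms f x))) else 0)"
      by (simp add: mult_ac)
  qed
  also have "\<dots> = (\<Sum>x\<in>weyl_labels ns. (1 / of_nat d) * (if ?C (fst x)
      then \<rho> $$ (r,r') * (of_nat d / of_nat (ns ! fst x * ns ! fst x)) else 0))"
  proof (rule sum.cong[OF refl])
    fix x assume x: "x \<in> weyl_labels ns"
    show "(1 / of_nat d) * (if ?C (fst x)
      then \<rho> $$ (r,r') * (of_nat (P div ns ! fst x) * of_nat (Q div ms ! fst (f x)) * (composite_weight ns ms f x * cnj (composite_weight ns ms f x))) else 0) =
      (1 / of_nat d) * (if ?C (fst x) then \<rho> $$ (r,r') * (of_nat d / of_nat (ns ! fst x * ns ! fst x)) else 0)"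
      using composite_weight_count[of x ns f ms P Q, OF x fmap[rule_format, OF x] posn posm dvn dvm] dPQ by simp
  qed
  also have "\<dots> = (\<Sum>i<length ns. \<Sum>p<ns!i. \<Sum>q<ns!i. (1 / of_nat d) * (if ?C i
      then \<rho> $$ (r,r') * (of_nat d / of_nat (ns ! i * ns ! i)) else 0))"
    unfolding sum_weyl_labels fst_conv by (rule refl)
  also have "\<dots> = (\<Sum>i<length ns. if ?C i then \<rho> $$ (r,r') else 0)"
  proof (rule sum.cong[OF refl])
    fix i assume "i \<in> {..<length ns}"
    then have n0: "0 < ns ! i" using posn by auto
    have "(\<Sum>p<ns!i. \<Sum>q<ns!i. (1 / of_nat d) * (if ?C i then \<rho> $$ (r,r') * (of_nat d / of_nat (ns ! i * ns ! i)) else 0))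
       = of_nat (ns ! i) * (of_nat (ns ! i) * ((1 / of_nat d) * (if ?C i then \<rho> $$ (r,r') * (of_nat d / of_nat (ns ! i * ns ! i)) else (0::complex))))"
      by simp
    also have "\<dots> = (if ?C i then \<rho> $$ (r,r') else 0)"
      using n0 d by (simp add: field_simps)
    finally show "(\<Sum>p<ns!i. \<Sum>q<ns!i. (1 / of_nat d) * (if ?C i then \<rho> $$ (r,r') * (of_nat d / of_nat (ns ! i * ns ! i)) else 0))
       = (if ?C i then \<rho> $$ (r,r') else 0)" .
  qed
  also have "\<dots> = \<rho> $$ (r,r')"
    by (rule sum_blocks_fdalg_index[OF rho r])
  finally show ?thesis .
qed

lemma weyl_channel_round_trip:
  assumes posn: "\<forall>n\<in>set ns. 0 < n" and posm: "\<forall>m\<in>set ms. 0 < m"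
    and dvn: "\<forall>i<length ns. ns!i dvd P" and dvm: "\<forall>j<length ms. ms!j dvd Q"
    and fmap: "\<forall>x\<in>weyl_labels ns. f x \<in> weyl_labels ms" and ginv: "\<forall>x\<in>weyl_labels ns. g (f x) = x"
    and lay: "bij_betw (\<lambda>h. (l1 h, l2 h)) {..<d} ({..<P} \<times> {..<Q})" and d: "0 < d" and dPQ: "d = P*Q"
    and \<rho>: "\<rho> \<in> fdalg ns"
  shows "weyl_channel ms ns g d Q P l2 l1 (with_maxent (weyl_channel ns ms f d P Q l1 l2) ns ms d \<rho>) = \<rho>"
proof -
  let ?A = "sum_list ns"
  let ?I = "kraus_labels ns ms f P Q" and ?I' = "kraus_labels ms ns g Q P"
  let ?w = "\<lambda>\<kappa>. composite_weight ns ms f (fst \<kappa>)"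
  let ?C = "\<lambda>\<kappa> r. in_block ns (fst (fst \<kappa>)) r"
  let ?partner = "\<lambda>\<kappa>. (f (fst \<kappa>), snd (snd \<kappa>), fst (snd \<kappa>))"
  have \<rho>c: "\<rho> \<in> carrier_mat ?A ?A" using \<rho> fdalg_carrier by blast
  have partner: "?partner \<kappa> \<in> ?I'" if "\<kappa> \<in> ?I" for \<kappa>
  proof -
    obtain x c1 c2 where "\<kappa> = (x,c1,c2)" by (cases \<kappa>) auto
    then show ?thesis using that fmap ginv by (auto simp: kraus_labels_iff)
  qed
  show ?thesis
    unfolding with_maxent_def
  proof (rule eq_matI)
    fix r r' assume "r < dim_row \<rho>" "r' < dim_col \<rho>"
    then have r: "r < ?A" "r' < ?A" using \<rho>c by auto
    have "weyl_channel ms ns g d Q P l2 l1 (tensor_id (weyl_channel ns ms f d P Q l1 l2) (?A * d) (sum_list ms) d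
        (kron \<rho> (maxent d))) $$ (r,r') =
      (\<Sum>\<kappa>'\<in>?I'. \<Sum>\<kappa>\<in>?I. (1 / of_nat d) *
        (if \<kappa>' = ?partner \<kappa> \<and> ?C \<kappa> r \<and> ?C \<kappa> r' then \<rho> $$ (r,r') * ?w \<kappa> * cnj (?w \<kappa>) else 0))"
      unfolding weyl_channel_def kraus_map_with_maxent_index[OF d \<rho>c r]
      by (intro sum.cong refl)
        (simp only: kraus_op_composite[OF posn posm dvn dvm fmap ginv lay] sum_delta_pair_cnj[OF r])
    also have "\<dots> = (\<Sum>\<kappa>\<in>?I. \<Sum>\<kappa>'\<in>?I'. (1 / of_nat d) *
        (if \<kappa>' = ?partner \<kappa> \<and> ?C \<kappa> r \<and> ?C \<kappa> r' then \<rho> $$ (r,r') * ?w \<kappa> * cnj (?w \<kappa>) else 0))"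
      by (rule sum.swap)
    also have "\<dots> = (\<Sum>\<kappa>\<in>?I. (1 / of_nat d) *
        (if ?C \<kappa> r \<and> ?C \<kappa> r' then \<rho> $$ (r,r') * (?w \<kappa> * cnj (?w \<kappa>)) else 0))"
    proof (rule sum.cong[OF refl])
      fix \<kappa> assume "\<kappa> \<in> ?I"
      have "(\<Sum>\<kappa>'\<in>?I'. (1 / of_nat d) *
          (if \<kappa>' = ?partner \<kappa> \<and> ?C \<kappa> r \<and> ?C \<kappa> r' then \<rho> $$ (r,r') * ?w \<kappa> * cnj (?w \<kappa>) else 0)) =
        (1 / of_nat d) *
          (if ?partner \<kappa> \<in> ?I' \<and> ?C \<kappa> r \<and> ?C \<kappa> r' then \<rho> $$ (r,r') * ?w \<kappa> * cnj (?w \<kappa>) else 0)"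
        by (simp only: sum_distrib_left[symmetric] sum_delta_conj[OF finite_kraus_labels])
      then show "(\<Sum>\<kappa>'\<in>?I'. (1 / of_nat d) *
          (if \<kappa>' = ?partner \<kappa> \<and> ?C \<kappa> r \<and> ?C \<kappa> r' then \<rho> $$ (r,r') * ?w \<kappa> * cnj (?w \<kappa>) else 0)) =
        (1 / of_nat d) * (if ?C \<kappa> r \<and> ?C \<kappa> r' then \<rho> $$ (r,r') * (?w \<kappa> * cnj (?w \<kappa>)) else 0)"
        using partner[OF \<open>\<kappa> \<in> ?I\<close>] by (simp only: mult.assoc simp_thms)
    qed
    also have "\<dots> = \<rho> $$ (r,r')"
      by (rule sum_composite_weights[OF posn posm dvn dvm fmap dPQ d \<rho> r])
    finally show "weyl_channel ms ns g d Q P l2 l1 (tensor_id (weyl_channel ns ms f d P Q l1 l2) (?A * d)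
        (sum_list ms) d (kron \<rho> (maxent d))) $$ (r,r') = \<rho> $$ (r,r')" .
  qed (use \<rho>c in \<open>simp_all add: weyl_channel_def kraus_map_def\<close>)
qed

lemma ent_invertible_weyl_channel:
  assumes posn: "\<forall>n\<in>set ns. 0 < n" and posm: "\<forall>m\<in>set ms. 0 < m"
    and f: "bij_betw f (weyl_labels ns) (weyl_labels ms)"
  defines "P \<equiv> prod_list ns" and "Q \<equiv> prod_list ms" and "d \<equiv> prod_list ns * prod_list ms"
  shows "ent_invertible ns ms d (maxent d) (weyl_channel ns ms f d P Q (\<lambda>h. h div Q) (\<lambda>h. h mod Q))"
proof -
  define g where "g = inv_into (weyl_labels ns) f"
  have fmap: "\<forall>x\<in>weyl_labels ns. f x \<in> weyl_labels ms" using f bij_betwE by blast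
  have gmap: "\<forall>y\<in>weyl_labels ms. g y \<in> weyl_labels ns"
    using bij_betw_inv_into[OF f] bij_betwE unfolding g_def by blast
  have ginv: "\<forall>x\<in>weyl_labels ns. g (f x) = x" unfolding g_def using f bij_betw_inv_into_left by fastforce
  have finv: "\<forall>y\<in>weyl_labels ms. f (g y) = y" unfolding g_def using f bij_betw_inv_into_right by fastforce
  have P0: "0 < P" and Q0: "0 < Q" unfolding P_def Q_def using posn posm by (simp_all add: prod_list_pos)
  have d0: "0 < d" and dPQ: "d = P * Q" unfolding d_def P_def Q_def using P0 Q0 by (simp_all add: P_def Q_def)
  have dvn: "\<forall>i<length ns. ns!i dvd P" and dvm: "\<forall>j<length ms. ms!j dvd Q"
    unfolding P_def Q_def by (auto intro: prod_list_dvd)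
  have lay1: "bij_betw (\<lambda>h. (h div Q, h mod Q)) {..<d} ({..<P} \<times> {..<Q})"
    unfolding dPQ by (rule bij_betw_div_mod[OF Q0])
  have lay2: "bij_betw (\<lambda>h. (h mod Q, h div Q)) {..<d} ({..<Q} \<times> {..<P})"
    unfolding dPQ by (rule bij_betw_mod_div[OF Q0])
  let ?M = "weyl_channel ns ms f d P Q (\<lambda>h. h div Q) (\<lambda>h. h mod Q)"
  let ?N = "weyl_channel ms ns g d Q P (\<lambda>h. h mod Q) (\<lambda>h. h div Q)"
  have "channel (ampl ns d) ms ?M" by (rule channel_weyl_channel[OF posn posm dvn dvm fmap lay1 d0])
  moreover have "channel (ampl ms d) ns ?N" by (rule channel_weyl_channel[OF posm posn dvm dvn gmap lay2 d0])
  moreover have "\<forall>\<rho> \<in> fdalg ns. ?N (with_maxent ?M ns ms d \<rho>) = \<rho>"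
    using weyl_channel_round_trip[OF posn posm dvn dvm fmap ginv lay1 d0 dPQ] by blast
  moreover have "\<forall>\<sigma> \<in> fdalg ms. ?M (with_maxent ?N ms ns d \<sigma>) = \<sigma>"
    using weyl_channel_round_trip[OF posm posn dvm dvn gmap finv lay2 d0] dPQ by (simp add: mult.commute)
  ultimately show ?thesis
    unfolding ent_invertible_def with_maxent_def swap_state_maxent by blast
qed

theorem mainTheorem2:
  fixes ns ms :: "nat list"
  assumes "\<forall>n \<in> set ns. 0 < n" and "\<forall>m \<in> set ms. 0 < m"
  shows "(\<exists>d > 0. \<exists>M. ent_invertible ns ms d (maxent d) M) \<longleftrightarrow> alg_dim ns = alg_dim ms"
proof
  assume "\<exists>d > 0. \<exists>M. ent_invertible ns ms d (maxent d) M"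
  then show "alg_dim ns = alg_dim ms"
    using card_block_entries_eq_if_ent_invertible by (auto simp: alg_dim_eq_card)
next
  assume "alg_dim ns = alg_dim ms"
  then have "card (weyl_labels ns) = card (weyl_labels ms)" by (simp add: alg_dim_eq_card card_weyl_labels)
  then obtain f where "bij_betw f (weyl_labels ns) (weyl_labels ms)"
    using finite_same_card_bij[OF finite_weyl_labels finite_weyl_labels] by blast
  moreover have "0 < prod_list ns * prod_list ms" using assms by (simp add: prod_list_pos)
  ultimately show "\<exists>d > 0. \<exists>M. ent_invertible ns ms d (maxent d) M"
    using ent_invertible_weyl_channel[OF assms] by blast
qed

end
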